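(* Let $H$ be a Hopf algebra over $\mathbb{C}$ with antipode $S$ and let $A$ be a left $H$-module algebra. On $\mathcal H_{CM}=A\rtimes H\ltimes A^{op}$ (underlying space $A\otimes H\otimes A$) define the product $(a\rtimes h\ltimes b)(a'\rtimes h'\ltimes b')=a(h_{(1)}\triangleright a')\rtimes h_{(2)}h'\ltimes(h_{(3)}\triangleright b')b$, source $\alpha(a)=a\rtimes1\ltimes1$, target $\beta(a)=1\rtimes1\ltimes a$, coproduct $\Delta(a\rtimes h\ltimes b)=(a\rtimes h_{(1)}\ltimes1)\otimes_A(1\rtimes h_{(2)}\ltimes b)$ and counit $\varepsilon(a\rtimes h\ltimes b)=a\varepsilon(h)b$. Then $\mathcal H_{CM}$ is a left $\times_A$-Hopf algebra: the map $\nu:\mathcal H_{CM}\otimes_{A^{op}}\mathcal H_{CM}\to\mathcal H_{CM}\otimes_A\mathcal H_{CM}$, $\nu((a\rtimes h\ltimes b)\otimes(a'\rtimes h'\ltimes b'))=(a\rtimes h_{(1)}\ltimes1)\otimes_A(h_{(2)}\triangleright a'\rtimes h_{(3)}h'\ltimes(h_{(4)}\triangleright b')b)$, is bijective.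
   Context: A left $R$-bialgebroid is a $\mathbb{C}$-algebra $\mathcal K$ with algebra maps $\mathfrak s:R\to\mathcal K$ (source), $\mathfrak t:R^{op}\to\mathcal K$ (target) with commuting ranges, $R$-bimodule structure $r_1\cdot k\cdot r_2=\mathfrak s(r_1)\mathfrak t(r_2)k$, and $R$-bimodule maps $\Delta(k)=k_{(1)}\otimes_R k_{(2)}$, $\varepsilon:\mathcal K\to R$ forming a coassociative counital $R$-coring, with $k_{(1)}\mathfrak t(r)\otimes_R k_{(2)}=k_{(1)}\otimes_R k_{(2)}\mathfrak s(r)$, $\Delta(1)=1\otimes_R1$, $\Delta(kk')=k_{(1)}k'_{(1)}\otimes_R k_{(2)}k'_{(2)}$, $\varepsilon(1)=1_R$, $\varepsilon(kk')=\varepsilon(k\mathfrak s(\varepsilon(k')))$. It is a left $\times_R$-Hopf algebra if $\nu:\mathcal K\otimes_{R^{op}}\mathcal K\to\mathcal K\otimes_R\mathcal K$, $k\otimes k'\mapsto k_{(1)}\otimes_R k_{(2)}k'$, is bijective, where the domain is balanced by $k\mathfrak t(r)\otimes k'=k\otimes\mathfrak t(r)k'$. Sweedler notation $h_{(1)}\otimes h_{(2)}\otimes\cdots$ is used for iterated coproducts in $H$. *)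

theory Defs
  imports Complex_Main "HOL-Library.Poly_Mapping"
begin

type_synonym 'a fs = "'a \<Rightarrow>\<^sub>0 complex"

definition gen :: "'a \<Rightarrow> 'a fs" where
  "gen x = Poly_Mapping.single x 1"

definition fsc :: "complex \<Rightarrow> 'a fs \<Rightarrow> 'a fs" where
  "fsc c f = Poly_Mapping.map (\<lambda>v. c * v) f"

definition lext :: "('a \<Rightarrow> 'b fs) \<Rightarrow> 'a fs \<Rightarrow> 'b fs" where
  "lext g f = (\<Sum>x\<in>Poly_Mapping.keys f. fsc (Poly_Mapping.lookup f x) (g x))"

definition bext :: "('a \<Rightarrow> 'b \<Rightarrow> 'c fs) \<Rightarrow> 'a fs \<Rightarrow> 'b fs \<Rightarrow> 'c fs" where
  "bext g f1 f2 = (\<Sum>x\<in>Poly_Mapping.keys f1. \<Sum>y\<in>Poly_Mapping.keys f2. fsc (Poly_Mapping.lookup f1 x * Poly_Mapping.lookup f2 y) (g x y))"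

definition tprod :: "'a fs \<Rightarrow> 'b fs \<Rightarrow> ('a \<times> 'b) fs" where
  "tprod f g = bext (\<lambda>x y. gen (x, y)) f g"

definition fmap :: "('a \<Rightarrow> 'b) \<Rightarrow> 'a fs \<Rightarrow> 'b fs" where
  "fmap g f = lext (\<lambda>x. gen (g x)) f"

definition feval :: "(complex \<Rightarrow> 'v \<Rightarrow> 'v) \<Rightarrow> 'v::comm_monoid_add fs \<Rightarrow> 'v" where
  "feval sc f = (\<Sum>x\<in>Poly_Mapping.keys f. sc (Poly_Mapping.lookup f x) x)"

definition fspan :: "'a fs set \<Rightarrow> 'a fs set" where
  "fspan R = {(\<Sum>r\<in>F. fsc (c r) r) | F c. finite F \<and> F \<subseteq> R}"

definition fequiv :: "'a fs set \<Rightarrow> 'a fs \<Rightarrow> 'a fs \<Rightarrow> bool" where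
  "fequiv R x y \<longleftrightarrow> x - y \<in> fspan R"

text \<open>free(V)/span(lin_rel sc) is V itself.\<close>
definition lin_rel :: "(complex \<Rightarrow> 'v::ab_group_add \<Rightarrow> 'v) \<Rightarrow> 'v fs set" where
  "lin_rel sc = {gen (x + y) - gen x - gen y | x y. True}
              \<union> {gen (sc c x) - fsc c (gen x) | c x. True}"

text \<open>If free(V)/R1 = V and free(W)/R2 = W then free(V x W)/trel R1 R2 = V \<otimes>_C W.\<close>
definition trel :: "'a fs set \<Rightarrow> 'b fs set \<Rightarrow> ('a \<times> 'b) fs set" where
  "trel R1 R2 = {tprod r (gen w) | r w. r \<in> R1} \<union> {tprod (gen v) r | v r. r \<in> R2}"

definition alg_over_C :: "(complex \<Rightarrow> 'h::ring_1 \<Rightarrow> 'h) \<Rightarrow> bool" where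
  "alg_over_C sc \<longleftrightarrow> vector_space sc \<and>
     (\<forall>c x y. sc c (x * y) = sc c x * y \<and> sc c (x * y) = x * sc c y)"

definition hopf_algebra ::
  "(complex \<Rightarrow> 'h::ring_1 \<Rightarrow> 'h) \<Rightarrow> ('h \<Rightarrow> ('h \<times> 'h) fs) \<Rightarrow> ('h \<Rightarrow> complex) \<Rightarrow> ('h \<Rightarrow> 'h) \<Rightarrow> bool"
  where
  "hopf_algebra sc \<Delta> \<epsilon> S \<longleftrightarrow>
     (let LH = lin_rel sc; T2 = trel LH LH; T3 = trel LH T2 in
     alg_over_C sc \<and>
     \<comment> \<open>coproduct: linear, coassociative, algebra map\<close>
     (\<forall>x y. fequiv T2 (\<Delta> (x + y)) (\<Delta> x + \<Delta> y)) \<and>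
     (\<forall>c x. fequiv T2 (\<Delta> (sc c x)) (fsc c (\<Delta> x))) \<and>
     (\<forall>h. fequiv T3
        (fmap (\<lambda>((x, y), z). (x, y, z)) (lext (\<lambda>(x, y). tprod (\<Delta> x) (gen y)) (\<Delta> h)))
        (lext (\<lambda>(x, y). tprod (gen x) (\<Delta> y)) (\<Delta> h))) \<and>
     (\<forall>x y. fequiv T2 (\<Delta> (x * y))
        (bext (\<lambda>(a, b) (a', b'). gen (a * a', b * b')) (\<Delta> x) (\<Delta> y))) \<and>
     fequiv T2 (\<Delta> 1) (gen (1, 1)) \<and>
     \<comment> \<open>counit: linear, counital, algebra map\<close>
     (\<forall>x y. \<epsilon> (x + y) = \<epsilon> x + \<epsilon> y) \<and>
     (\<forall>c x. \<epsilon> (sc c x) = c * \<epsilon> x) \<and>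
     (\<forall>h. feval sc (fmap (\<lambda>(x, y). sc (\<epsilon> x) y) (\<Delta> h)) = h) \<and>
     (\<forall>h. feval sc (fmap (\<lambda>(x, y). sc (\<epsilon> y) x) (\<Delta> h)) = h) \<and>
     (\<forall>x y. \<epsilon> (x * y) = \<epsilon> x * \<epsilon> y) \<and>
     \<epsilon> 1 = 1 \<and>
     \<comment> \<open>antipode\<close>
     (\<forall>x y. S (x + y) = S x + S y) \<and>
     (\<forall>c x. S (sc c x) = sc c (S x)) \<and>
     (\<forall>h. feval sc (fmap (\<lambda>(x, y). S x * y) (\<Delta> h)) = sc (\<epsilon> h) 1) \<and>
     (\<forall>h. feval sc (fmap (\<lambda>(x, y). x * S y) (\<Delta> h)) = sc (\<epsilon> h) 1))"

definition module_algebra ::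
  "(complex \<Rightarrow> 'h::ring_1 \<Rightarrow> 'h) \<Rightarrow> ('h \<Rightarrow> ('h \<times> 'h) fs) \<Rightarrow> ('h \<Rightarrow> complex)
   \<Rightarrow> (complex \<Rightarrow> 'a::ring_1 \<Rightarrow> 'a) \<Rightarrow> ('h \<Rightarrow> 'a \<Rightarrow> 'a) \<Rightarrow> bool" where
  "module_algebra scH \<Delta> \<epsilon> scA act \<longleftrightarrow>
     alg_over_C scA \<and>
     (\<forall>x y a. act (x + y) a = act x a + act y a) \<and>
     (\<forall>c x a. act (scH c x) a = scA c (act x a)) \<and>
     (\<forall>h a b. act h (a + b) = act h a + act h b) \<and>
     (\<forall>h c a. act h (scA c a) = scA c (act h a)) \<and>
     (\<forall>x y a. act (x * y) a = act x (act y a)) \<and>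
     (\<forall>a. act 1 a = a) \<and>
     (\<forall>h a b. act h (a * b) = feval scA (fmap (\<lambda>(x, y). act x a * act y b) (\<Delta> h))) \<and>
     (\<forall>h. act h 1 = scA (\<epsilon> h) 1)"

text \<open>Iterated coproducts h(1) x h(2) x h(3) and h(1) x ... x h(4).\<close>
definition cop2 :: "('h \<Rightarrow> ('h \<times> 'h) fs) \<Rightarrow> 'h \<Rightarrow> ('h \<times> 'h \<times> 'h) fs" where
  "cop2 \<Delta> h = fmap (\<lambda>((x, y), z). (x, y, z)) (lext (\<lambda>(x, y). tprod (\<Delta> x) (gen y)) (\<Delta> h))"

definition cop3 :: "('h \<Rightarrow> ('h \<times> 'h) fs) \<Rightarrow> 'h \<Rightarrow> ('h \<times> 'h \<times> 'h \<times> 'h) fs" where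
  "cop3 \<Delta> h = lext (\<lambda>(x, y, z). fmap (\<lambda>(p, q). (p, q, y, z)) (\<Delta> x)) (cop2 \<Delta> h)"

text \<open>Relations cutting free(A x H x A) down to A \<otimes> H \<otimes> A.\<close>
definition cm_rel :: "(complex \<Rightarrow> 'a::ab_group_add \<Rightarrow> 'a) \<Rightarrow> (complex \<Rightarrow> 'h::ab_group_add \<Rightarrow> 'h)
   \<Rightarrow> ('a \<times> 'h \<times> 'a) fs set" where
  "cm_rel scA scH = trel (lin_rel scA) (trel (lin_rel scH) (lin_rel scA))"

definition cm_mult :: "('h::ring_1 \<Rightarrow> ('h \<times> 'h) fs) \<Rightarrow> ('h \<Rightarrow> 'a::ring_1 \<Rightarrow> 'a)
   \<Rightarrow> ('a \<times> 'h \<times> 'a) fs \<Rightarrow> ('a \<times> 'h \<times> 'a) fs \<Rightarrow> ('a \<times> 'h \<times> 'a) fs" where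
  "cm_mult \<Delta> act = bext (\<lambda>(a, h, b) (a', h', b').
      lext (\<lambda>(h1, h2, h3). gen (a * act h1 a', h2 * h', act h3 b' * b)) (cop2 \<Delta> h))"

definition cm_source :: "'a::ring_1 \<Rightarrow> ('a \<times> 'h::ring_1 \<times> 'a) fs" where
  "cm_source a = gen (a, 1, 1)"

definition cm_target :: "'a::ring_1 \<Rightarrow> ('a \<times> 'h::ring_1 \<times> 'a) fs" where
  "cm_target a = gen (1, 1, a)"

definition cm_tens_A_rel where
  "cm_tens_A_rel scA scH \<Delta> act =
     trel (cm_rel scA scH) (cm_rel scA scH) \<union>
     {tprod (cm_mult \<Delta> act (cm_target a) k) k' - tprod k (cm_mult \<Delta> act (cm_source a) k') | a k k'. True}"

definition cm_tens_Aop_rel where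
  "cm_tens_Aop_rel scA scH \<Delta> act =
     trel (cm_rel scA scH) (cm_rel scA scH) \<union>
     {tprod (cm_mult \<Delta> act k (cm_target a)) k' - tprod k (cm_mult \<Delta> act (cm_target a) k') | a k k'. True}"

definition cm_nu :: "('h::ring_1 \<Rightarrow> ('h \<times> 'h) fs) \<Rightarrow> ('h \<Rightarrow> 'a::ring_1 \<Rightarrow> 'a)
   \<Rightarrow> (('a \<times> 'h \<times> 'a) \<times> ('a \<times> 'h \<times> 'a)) fs \<Rightarrow> (('a \<times> 'h \<times> 'a) \<times> ('a \<times> 'h \<times> 'a)) fs" where
  "cm_nu \<Delta> act = lext (\<lambda>((a, h, b), (a', h', b')).
      lext (\<lambda>(h1, h2, h3, h4). gen ((a, h1, 1), (act h2 a', h3 * h', act h4 b' * b))) (cop3 \<Delta> h))"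

end

theory Submission
  imports Defs
begin

text \<open>
  The inverse of \<open>\<nu>\<close> is
  \<open>\<nu>\<^sup>-\<^sup>1((a \<rtimes> h \<ltimes> b) \<otimes> (a' \<rtimes> h' \<ltimes> b')) = (a \<rtimes> h\<^sub>1 \<ltimes> 1) \<otimes> (S(h\<^sub>4) \<triangleright> ba' \<rtimes> S(h\<^sub>3) h' \<ltimes> S(h\<^sub>2) \<triangleright> b')\<close>.
  Expanding either composite yields \<open>h\<^sub>1 \<otimes> S(h\<^sub>2) h\<^sub>7 \<otimes> S(h\<^sub>3) h\<^sub>6 \<otimes> S(h\<^sub>4) h\<^sub>5\<close> or its mirror image,
  which collapses to \<open>h \<otimes> 1 \<otimes> 1 \<otimes> 1\<close> by cancelling \<open>S(h\<^sub>i) h\<^sub>i\<^sub>+\<^sub>1\<close> from the inside out.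
  What is left is to move \<open>b\<close> across the tensor sign: in \<open>\<otimes>\<^sub>A\<close> directly by the balancing
  relation, in \<open>\<otimes>\<^sub>A\<^sub>o\<^sub>p\<close> via the normal form
  \<open>(a \<rtimes> h \<ltimes> b) \<otimes> (a' \<rtimes> h' \<ltimes> b') = (a \<rtimes> h\<^sub>1 \<ltimes> 1) \<otimes> (a' \<rtimes> h' \<ltimes> b' (S(h\<^sub>2) \<triangleright> b))\<close>.
  That \<open>\<nu>\<close> and \<open>\<nu>\<^sup>-\<^sup>1\<close> respect the balancing relations is checked on generators.

  All spaces are quotients of free vector spaces in which the Hopf and module-algebra axioms
  hold only modulo the defining relations, so every identity is a congruence modulo a subspace.
\<close>

section \<open>Formal linear combinations\<close>

lemma lookup_fsc [simp]: "Poly_Mapping.lookup (fsc c f) x = c * Poly_Mapping.lookup f x"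
  unfolding fsc_def by (simp add: Poly_Mapping.map.rep_eq when_def)

lemma lookup_gen: "Poly_Mapping.lookup (gen x) y = (if x = y then 1 else 0)"
  unfolding gen_def by (simp add: lookup_single when_def)

lemma keys_gen [simp]: "Poly_Mapping.keys (gen x) = {x}"
  unfolding gen_def by simp

lemma fsc_add_right: "fsc c (f + g) = fsc c f + fsc c g"
  by (rule poly_mapping_eqI) (simp add: lookup_add distrib_left)

lemma fsc_add_left: "fsc (c + d) f = fsc c f + fsc d f"
  by (rule poly_mapping_eqI) (simp add: lookup_add distrib_right)

lemma fsc_fsc [simp]: "fsc c (fsc d f) = fsc (c * d) f"
  by (rule poly_mapping_eqI) simp

lemma fsc_one [simp]: "fsc 1 f = f"
  by (rule poly_mapping_eqI) simp

lemma fsc_zero [simp]: "fsc 0 f = 0"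
  by (rule poly_mapping_eqI) simp

lemma fsc_zero_right [simp]: "fsc c 0 = 0"
  by (rule poly_mapping_eqI) simp

lemma fsc_diff_right: "fsc c (f - g) = fsc c f - fsc c g"
  by (rule poly_mapping_eqI) (simp add: lookup_minus right_diff_distrib)

lemma fsc_neg_one: "fsc (-1) f = - f"
  by (rule poly_mapping_eqI) simp

lemma fsc_sum: "fsc c (sum g I) = (\<Sum>i\<in>I. fsc c (g i))"
  by (induction I rule: infinite_finite_induct) (auto simp: fsc_add_right)

lemma lext_sum_superset:
  assumes "finite D" "Poly_Mapping.keys f \<subseteq> D"
  shows "lext g f = (\<Sum>x\<in>D. fsc (Poly_Mapping.lookup f x) (g x))"
  unfolding lext_def
  by (rule sum.mono_neutral_left) (use assms in \<open>auto simp: in_keys_iff\<close>)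

lemma lext_gen [simp]: "lext g (gen x) = g x"
  unfolding lext_def by (simp add: lookup_gen)

lemma lext_zero [simp]: "lext g 0 = 0"
  unfolding lext_def by simp

lemma lext_add: "lext g (f1 + f2) = lext g f1 + lext g f2"
proof -
  let ?D = "Poly_Mapping.keys f1 \<union> Poly_Mapping.keys f2"
  have "lext g (f1 + f2) = (\<Sum>x\<in>?D. fsc (Poly_Mapping.lookup (f1 + f2) x) (g x))"
    by (rule lext_sum_superset) (auto simp: keys_add)
  also have "\<dots> = (\<Sum>x\<in>?D. fsc (Poly_Mapping.lookup f1 x) (g x))
                 + (\<Sum>x\<in>?D. fsc (Poly_Mapping.lookup f2 x) (g x))"
    by (simp add: lookup_add fsc_add_left sum.distrib)
  also have "\<dots> = lext g f1 + lext g f2"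
    by (subst (1 2) lext_sum_superset[of ?D]) auto
  finally show ?thesis .
qed

lemma lext_fsc: "lext g (fsc c f) = fsc c (lext g f)"
proof -
  have "lext g (fsc c f) = (\<Sum>x\<in>Poly_Mapping.keys f. fsc (Poly_Mapping.lookup (fsc c f) x) (g x))"
    by (rule lext_sum_superset) (auto simp: in_keys_iff)
  then show ?thesis by (simp add: lext_def fsc_sum)
qed

lemma lext_minus: "lext g (- f) = - lext g f"
  using lext_fsc[of g "-1" f] by (simp add: fsc_neg_one)

lemma lext_diff: "lext g (f1 - f2) = lext g f1 - lext g f2"
  using lext_add[of g f1 "- f2"] by (simp add: lext_minus)

lemma lext_sum: "lext g (sum F I) = (\<Sum>i\<in>I. lext g (F i))"
  by (induction I rule: infinite_finite_induct) (auto simp: lext_add)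

lemma lext_add_fun: "lext (\<lambda>x. g1 x + g2 x) f = lext g1 f + lext g2 f"
  unfolding lext_def by (simp add: fsc_add_right sum.distrib)

lemma lext_fsc_fun: "lext (\<lambda>x. fsc c (g x)) f = fsc c (lext g f)"
  unfolding lext_def by (simp add: fsc_sum mult.commute)

lemma lext_diff_fun: "lext (\<lambda>x. g1 x - g2 x) f = lext g1 f - lext g2 f"
  unfolding lext_def by (simp add: fsc_diff_right sum_subtractf)

lemma lext_gen_self: "lext gen f = f"
proof -
  have *: "finite I \<Longrightarrow> Poly_Mapping.lookup (\<Sum>i\<in>I. fsc (Poly_Mapping.lookup f i) (gen i)) j =
            (if j \<in> I then Poly_Mapping.lookup f j else 0)" for I j
    by (induction I rule: finite_induct) (auto simp: lookup_gen lookup_add)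
  show ?thesis
    unfolding lext_def by (rule poly_mapping_eqI) (fastforce simp add: in_keys_iff *)
qed

lemma lext_comp: "lext F (lext g f) = lext (\<lambda>x. lext F (g x)) f"
  unfolding lext_def[of g] by (simp add: lext_sum lext_fsc lext_def[of "\<lambda>x. lext F (g x)"])

lemma fs_induct [case_names zero gen add fsc]:
  assumes "P 0" "\<And>x. P (gen x)" "\<And>f g. P f \<Longrightarrow> P g \<Longrightarrow> P (f + g)" "\<And>c f. P f \<Longrightarrow> P (fsc c f)"
  shows "P f"
proof -
  have "finite I \<Longrightarrow> P (\<Sum>x\<in>I. fsc (Poly_Mapping.lookup f x) (gen x))" for I
    by (induction I rule: finite_induct) (auto intro: assms)
  then have "P (lext gen f)" unfolding lext_def by simp
  then show ?thesis by (simp add: lext_gen_self)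
qed

lemma bext_eq_lext: "bext g f1 f2 = lext (\<lambda>x. lext (g x) f2) f1"
  unfolding bext_def lext_def by (simp add: fsc_sum)

lemma tprod_eq_lext: "tprod f g = lext (\<lambda>x. lext (\<lambda>y. gen (x, y)) g) f"
  unfolding tprod_def bext_eq_lext by simp

lemma tprod_gen_right: "tprod f (gen w) = lext (\<lambda>x. gen (x, w)) f"
  unfolding tprod_eq_lext by simp

lemma tprod_gen_left: "tprod (gen v) f = lext (\<lambda>y. gen (v, y)) f"
  unfolding tprod_eq_lext by simp

lemma tprod_gen_gen [simp]: "tprod (gen v) (gen w) = gen (v, w)"
  unfolding tprod_eq_lext by simp

lemma tprod_add_left: "tprod (f1 + f2) g = tprod f1 g + tprod f2 g"
  unfolding tprod_eq_lext by (simp add: lext_add)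

lemma tprod_add_right: "tprod f (g1 + g2) = tprod f g1 + tprod f g2"
  unfolding tprod_eq_lext by (simp add: lext_add lext_add_fun)

lemma tprod_fsc_left: "tprod (fsc c f) g = fsc c (tprod f g)"
  unfolding tprod_eq_lext by (simp add: lext_fsc)

lemma tprod_fsc_right: "tprod f (fsc c g) = fsc c (tprod f g)"
  unfolding tprod_eq_lext by (simp add: lext_fsc lext_fsc_fun)

lemma bext_gen_gen [simp]: "bext g (gen x) (gen y) = g x y"
  unfolding bext_eq_lext by simp

lemma bext_add_left: "bext g (f1 + f2) f = bext g f1 f + bext g f2 f"
  unfolding bext_eq_lext by (simp add: lext_add)

lemma bext_add_right: "bext g f (f1 + f2) = bext g f f1 + bext g f f2"
  unfolding bext_eq_lext by (simp add: lext_add lext_add_fun)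

lemma bext_fsc_left: "bext g (fsc c f1) f = fsc c (bext g f1 f)"
  unfolding bext_eq_lext by (simp add: lext_fsc)

lemma bext_fsc_right: "bext g f (fsc c f1) = fsc c (bext g f f1)"
  unfolding bext_eq_lext by (simp add: lext_fsc lext_fsc_fun)

lemma lext_trel_mem:
  assumes "r \<in> trel R1 R2"
    and "\<And>w r. r \<in> R1 \<Longrightarrow> lext (\<lambda>x. G (x, w)) r \<in> V"
    and "\<And>v r. r \<in> R2 \<Longrightarrow> lext (\<lambda>y. G (v, y)) r \<in> V"
  shows "lext G r \<in> V"
  using assms unfolding trel_def by (auto simp: tprod_gen_right tprod_gen_left lext_comp)

section \<open>Subspaces and congruence modulo a subspace\<close>

definition fs_subspace :: "'a fs set \<Rightarrow> bool" where
  "fs_subspace V \<longleftrightarrow> 0 \<in> V \<and> (\<forall>x\<in>V. \<forall>y\<in>V. x + y \<in> V) \<and> (\<forall>c. \<forall>x\<in>V. fsc c x \<in> V)"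

lemma fs_subspace_zero: "fs_subspace V \<Longrightarrow> 0 \<in> V"
  unfolding fs_subspace_def by blast

lemma fs_subspace_add: "fs_subspace V \<Longrightarrow> x \<in> V \<Longrightarrow> y \<in> V \<Longrightarrow> x + y \<in> V"
  unfolding fs_subspace_def by blast

lemma fs_subspace_fsc: "fs_subspace V \<Longrightarrow> x \<in> V \<Longrightarrow> fsc c x \<in> V"
  unfolding fs_subspace_def by blast

lemma fs_subspace_uminus: "fs_subspace V \<Longrightarrow> x \<in> V \<Longrightarrow> - x \<in> V"
  using fs_subspace_fsc[of V x "-1"] by (simp add: fsc_neg_one)

lemma fs_subspace_diff: "fs_subspace V \<Longrightarrow> x \<in> V \<Longrightarrow> y \<in> V \<Longrightarrow> x - y \<in> V"
  using fs_subspace_add[of V x "- y"] fs_subspace_uminus[of V y] by simp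

lemma fs_subspace_sum: "fs_subspace V \<Longrightarrow> (\<And>i. i \<in> I \<Longrightarrow> g i \<in> V) \<Longrightarrow> sum g I \<in> V"
  by (induction I rule: infinite_finite_induct) (auto intro: fs_subspace_add fs_subspace_zero)

lemma lext_mem: "fs_subspace V \<Longrightarrow> (\<And>x. x \<in> Poly_Mapping.keys f \<Longrightarrow> g x \<in> V) \<Longrightarrow> lext g f \<in> V"
  unfolding lext_def by (auto intro!: fs_subspace_sum fs_subspace_fsc)

lemma bilinear_mem:
  assumes V: "fs_subspace V"
    and add1: "\<And>f g k. B (f + g) k = B f k + B g k" and fsc1: "\<And>c f k. B (fsc c f) k = fsc c (B f k)"
    and add2: "\<And>f k k'. B f (k + k') = B f k + B f k'" and fsc2: "\<And>c f k. B f (fsc c k) = fsc c (B f k)"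
    and gens: "\<And>x y. B (gen x) (gen y) \<in> V"
  shows "B f k \<in> V"
proof (induction f arbitrary: k rule: fs_induct)
  case zero
  show ?case using fsc1[where c = 0 and f = 0 and k = k] fs_subspace_zero[OF V] by simp
next
  case (gen x)
  show ?case
  proof (induction k rule: fs_induct)
    case zero
    show ?case using fsc2[where c = 0 and f = "gen x" and k = 0] fs_subspace_zero[OF V] by simp
  qed (auto simp: add2 fsc2 gens intro: fs_subspace_add[OF V] fs_subspace_fsc[OF V])
qed (auto simp: add1 fsc1 intro: fs_subspace_add[OF V] fs_subspace_fsc[OF V])

lemma fs_subspace_fspan: "fs_subspace (fspan R)"
  unfolding fs_subspace_def
proof (intro conjI ballI allI)
  show "0 \<in> fspan R"
    unfolding fspan_def by (rule CollectI, rule exI[of _ "{}"]) simp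
next
  fix x y assume "x \<in> fspan R" "y \<in> fspan R"
  then obtain F1 c1 F2 c2 where x: "x = (\<Sum>r\<in>F1. fsc (c1 r) r)" "finite F1" "F1 \<subseteq> R"
    and y: "y = (\<Sum>r\<in>F2. fsc (c2 r) r)" "finite F2" "F2 \<subseteq> R"
    unfolding fspan_def by blast
  have extend: "(\<Sum>r\<in>F. fsc (c r) r) = (\<Sum>r\<in>F1 \<union> F2. fsc (if r \<in> F then c r else 0) r)"
    if "F \<subseteq> F1 \<union> F2" for F c
    by (rule sum.mono_neutral_cong_left) (use that x y in auto)
  let ?c = "\<lambda>r. (if r \<in> F1 then c1 r else 0) + (if r \<in> F2 then c2 r else 0)"
  have "x + y = (\<Sum>r\<in>F1 \<union> F2. fsc (?c r) r)"
    unfolding x(1) y(1) fsc_add_left sum.distrib by (subst (1 2) extend) auto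
  then show "x + y \<in> fspan R"
    unfolding fspan_def using x y by (intro CollectI exI[of _ "F1 \<union> F2"] exI[of _ ?c]) simp
next
  fix c x assume "x \<in> fspan R"
  then obtain F c1 where x: "x = (\<Sum>r\<in>F. fsc (c1 r) r)" "finite F" "F \<subseteq> R"
    unfolding fspan_def by blast
  have "fsc c x = (\<Sum>r\<in>F. fsc (c * c1 r) r)"
    unfolding x(1) by (simp add: fsc_sum)
  then show "fsc c x \<in> fspan R"
    unfolding fspan_def using x by (intro CollectI exI[of _ F] exI[of _ "\<lambda>r. c * c1 r"]) simp
qed

lemma fspan_base: "r \<in> R \<Longrightarrow> r \<in> fspan R"
  unfolding fspan_def by (rule CollectI, rule exI[of _ "{r}"], rule exI[of _ "\<lambda>_. 1"]) simp

lemma fspan_minimal: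
  assumes "fs_subspace V" "R \<subseteq> V" "x \<in> fspan R"
  shows "x \<in> V"
  using assms unfolding fspan_def by (auto intro!: fs_subspace_sum fs_subspace_fsc)

lemma lext_fspan_mem:
  assumes "fs_subspace V" "\<And>r. r \<in> R \<Longrightarrow> lext F r \<in> V" "x \<in> fspan R"
  shows "lext F x \<in> V"
proof -
  have "fs_subspace {x. lext F x \<in> V}"
    using assms(1) unfolding fs_subspace_def by (auto simp: lext_add lext_fsc)
  then show ?thesis using fspan_minimal[of "{x. lext F x \<in> V}" R x] assms by auto
qed

definition eqmod :: "'a fs set \<Rightarrow> 'a fs \<Rightarrow> 'a fs \<Rightarrow> bool" where
  "eqmod V x y \<longleftrightarrow> x - y \<in> V"

lemma fequiv_iff_eqmod: "fequiv R x y \<longleftrightarrow> eqmod (fspan R) x y"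
  unfolding fequiv_def eqmod_def ..

lemma eqmod_refl: "fs_subspace V \<Longrightarrow> eqmod V x x"
  unfolding eqmod_def using fs_subspace_zero[of V] by simp

lemma eqmod_sym: "fs_subspace V \<Longrightarrow> eqmod V x y \<Longrightarrow> eqmod V y x"
  unfolding eqmod_def using fs_subspace_uminus[of V "x - y"] by simp

lemma eqmod_trans: "fs_subspace V \<Longrightarrow> eqmod V x y \<Longrightarrow> eqmod V y z \<Longrightarrow> eqmod V x z"
  unfolding eqmod_def using fs_subspace_add[of V "x - y" "y - z"] by simp

lemma eqmod_add: "fs_subspace V \<Longrightarrow> eqmod V x y \<Longrightarrow> eqmod V x' y' \<Longrightarrow> eqmod V (x + x') (y + y')"
  unfolding eqmod_def using fs_subspace_add[of V "x - y" "x' - y'"] by (simp add: algebra_simps)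

lemma eqmod_fsc: "fs_subspace V \<Longrightarrow> eqmod V x y \<Longrightarrow> eqmod V (fsc c x) (fsc c y)"
  unfolding eqmod_def using fs_subspace_fsc[of V "x - y" c] by (simp add: fsc_diff_right)

lemma eqmod_lext:
  "fs_subspace V \<Longrightarrow> (\<And>x. eqmod V (F x) (G x)) \<Longrightarrow> eqmod V (lext F f) (lext G f)"
  unfolding eqmod_def lext_diff_fun[symmetric] by (rule lext_mem)

definition sc_linear :: "(complex \<Rightarrow> 'x \<Rightarrow> 'x) \<Rightarrow> (complex \<Rightarrow> 'y \<Rightarrow> 'y) \<Rightarrow> ('x::plus \<Rightarrow> 'y::plus) \<Rightarrow> bool"
  where "sc_linear sc sc' f \<longleftrightarrow> (\<forall>x y. f (x + y) = f x + f y) \<and> (\<forall>c x. f (sc c x) = sc' c (f x))"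

text \<open>The maps we need are given on elements of \<open>H\<close> or \<open>A\<close> and land in a quotient of a free space;
  they are linear only after passing to the quotient.\<close>

definition lin_mod :: "(complex \<Rightarrow> 'x \<Rightarrow> 'x) \<Rightarrow> 'b fs set \<Rightarrow> ('x::plus \<Rightarrow> 'b fs) \<Rightarrow> bool" where
  "lin_mod sc V f \<longleftrightarrow> (\<forall>x y. f (x + y) - f x - f y \<in> V) \<and> (\<forall>c x. f (sc c x) - fsc c (f x) \<in> V)"

lemma sc_linear_id: "sc_linear sc sc (\<lambda>x. x)"
  unfolding sc_linear_def by simp

lemma sc_linear_mult_right:
  "alg_over_C sc' \<Longrightarrow> sc_linear sc sc' f \<Longrightarrow> sc_linear sc sc' (\<lambda>t. f t * c)"
  unfolding sc_linear_def alg_over_C_def by (simp add: distrib_right)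

lemma sc_linear_mult_left:
  "alg_over_C sc' \<Longrightarrow> sc_linear sc sc' f \<Longrightarrow> sc_linear sc sc' (\<lambda>t. c * f t)"
  unfolding sc_linear_def alg_over_C_def by (metis distrib_left)

lemma lin_mod_comp: "lin_mod sc' V G \<Longrightarrow> sc_linear sc sc' f \<Longrightarrow> lin_mod sc V (\<lambda>x. G (f x))"
  unfolding lin_mod_def sc_linear_def by simp

lemma lin_mod_fsc: "fs_subspace V \<Longrightarrow> lin_mod sc V F \<Longrightarrow> lin_mod sc V (\<lambda>t. fsc c (F t))"
  unfolding lin_mod_def
  by (metis (no_types, lifting) fs_subspace_fsc fsc_diff_right fsc_fsc mult.commute)

lemma lin_mod_zero:
  fixes G :: "'x::monoid_add \<Rightarrow> 'b fs"
  assumes "fs_subspace V" "lin_mod sc V G"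
  shows "G 0 \<in> V"
proof -
  have "G (0 + 0) - G 0 - G 0 \<in> V" using assms(2) unfolding lin_mod_def by blast
  then have "- G 0 \<in> V" by simp
  then show ?thesis using fs_subspace_uminus[OF assms(1)] by fastforce
qed

lemma lext_lin_rel_mem: "lin_mod sc V G \<Longrightarrow> r \<in> lin_rel sc \<Longrightarrow> lext G r \<in> V"
  unfolding lin_rel_def lin_mod_def by (auto simp: lext_diff lext_fsc lext_add)

lemma lin_mod_gen:
  assumes "\<And>r. r \<in> lin_rel sc \<Longrightarrow> lext (\<lambda>x. gen (E x)) r \<in> V"
  shows "lin_mod sc V (\<lambda>x. gen (E x))"
  unfolding lin_mod_def
proof (intro conjI allI)
  fix x y
  have "gen (x + y) - gen x - gen y \<in> lin_rel sc" unfolding lin_rel_def by blast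
  from assms[OF this] show "gen (E (x + y)) - gen (E x) - gen (E y) \<in> V"
    by (simp add: lext_diff)
next
  fix c x
  have "gen (sc c x) - fsc c (gen x) \<in> lin_rel sc" unfolding lin_rel_def by blast
  from assms[OF this] show "gen (E (sc c x)) - fsc c (gen (E x)) \<in> V"
    by (simp add: lext_diff lext_fsc)
qed

lemma feval_zero [simp]: "feval sc 0 = 0"
  unfolding feval_def by simp

context
  fixes sc :: "complex \<Rightarrow> 'v::ab_group_add \<Rightarrow> 'v"
  assumes vs: "vector_space sc"
begin

interpretation vector_space sc by (rule vs)

lemma feval_superset:
  assumes "finite D" "Poly_Mapping.keys f \<subseteq> D"
  shows "feval sc f = (\<Sum>x\<in>D. sc (Poly_Mapping.lookup f x) x)"
  unfolding feval_def
  by (rule sum.mono_neutral_left) (use assms in \<open>auto simp: in_keys_iff\<close>)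

lemma feval_add: "feval sc (f1 + f2) = feval sc f1 + feval sc f2"
proof -
  let ?D = "Poly_Mapping.keys f1 \<union> Poly_Mapping.keys f2"
  have "feval sc (f1 + f2) = (\<Sum>x\<in>?D. sc (Poly_Mapping.lookup (f1 + f2) x) x)"
    by (rule feval_superset) (auto simp: keys_add)
  also have "\<dots> = (\<Sum>x\<in>?D. sc (Poly_Mapping.lookup f1 x) x) + (\<Sum>x\<in>?D. sc (Poly_Mapping.lookup f2 x) x)"
    by (simp add: lookup_add scale_left_distrib sum.distrib)
  also have "\<dots> = feval sc f1 + feval sc f2"
    by (subst (1 2) feval_superset[of ?D]) auto
  finally show ?thesis .
qed

lemma feval_fsc: "feval sc (fsc c f) = sc c (feval sc f)"
proof -
  have "feval sc (fsc c f) = (\<Sum>x\<in>Poly_Mapping.keys f. sc (Poly_Mapping.lookup (fsc c f) x) x)"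
    by (rule feval_superset) (auto simp: in_keys_iff)
  then show ?thesis by (simp add: feval_def scale_sum_right)
qed

lemma feval_sum: "feval sc (sum F I) = (\<Sum>i\<in>I. feval sc (F i))"
  by (induction I rule: infinite_finite_induct) (auto simp: feval_add)

lemma feval_gen: "feval sc (gen x) = x"
  unfolding feval_def by (simp add: lookup_gen)

lemma feval_fmap: "feval sc (fmap f z) = (\<Sum>x\<in>Poly_Mapping.keys z. sc (Poly_Mapping.lookup z x) (f x))"
  unfolding fmap_def lext_def feval_sum by (simp add: feval_fsc feval_gen)

end

lemma lin_mod_sum:
  assumes V: "fs_subspace V" and G: "lin_mod sc V G" and vs: "vector_space sc"
  shows "G (\<Sum>x\<in>I. sc (c x) (v x)) - (\<Sum>x\<in>I. fsc (c x) (G (v x))) \<in> V"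
proof (induction I rule: infinite_finite_induct)
  case (insert x F)
  let ?s = "\<Sum>x\<in>F. sc (c x) (v x)" and ?y = "sc (c x) (v x)"
  have "G (?y + ?s) - (fsc (c x) (G (v x)) + (\<Sum>x\<in>F. fsc (c x) (G (v x))))
     = (G (?y + ?s) - G ?y - G ?s) + (G ?y - fsc (c x) (G (v x)))
       + (G ?s - (\<Sum>x\<in>F. fsc (c x) (G (v x))))"
    by (simp add: algebra_simps)
  also have "\<dots> \<in> V"
    using G insert.IH unfolding lin_mod_def by (intro fs_subspace_add V) auto
  finally show ?case using insert by simp
qed (use lin_mod_zero[OF V G] in simp_all)

lemma lin_mod_feval:
  assumes "fs_subspace V" "lin_mod sc V G" "vector_space sc"
  shows "G (feval sc (fmap f z)) - lext (\<lambda>p. G (f p)) z \<in> V"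
  unfolding feval_fmap[OF assms(3)] lext_def using lin_mod_sum[OF assms] .

section \<open>Sweedler sums\<close>

text \<open>\<open>sweedler \<Delta> \<Phi> h = \<Phi> h\<^sub>1 h\<^sub>2\<close>; iterated coproducts are written as nested Sweedler sums.\<close>

definition sweedler :: "('h \<Rightarrow> ('h \<times> 'h) fs) \<Rightarrow> ('h \<Rightarrow> 'h \<Rightarrow> 'b fs) \<Rightarrow> 'h \<Rightarrow> 'b fs" where
  "sweedler \<Delta> \<Phi> h = lext (\<lambda>p. \<Phi> (fst p) (snd p)) (\<Delta> h)"

lemma lext_sweedler: "lext g (sweedler \<Delta> \<Phi> h) = sweedler \<Delta> (\<lambda>x y. lext g (\<Phi> x y)) h"
  unfolding sweedler_def by (simp add: lext_comp)

lemma tprod_sweedler_left: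
  "tprod (sweedler \<Delta> \<Phi> h) (gen w) = sweedler \<Delta> (\<lambda>x y. tprod (\<Phi> x y) (gen w)) h"
  unfolding tprod_gen_right lext_sweedler ..

lemma tprod_sweedler_right:
  "tprod (gen v) (sweedler \<Delta> \<Phi> h) = sweedler \<Delta> (\<lambda>x y. tprod (gen v) (\<Phi> x y)) h"
  unfolding tprod_gen_left lext_sweedler ..

lemma lext_cop2: "lext F (cop2 \<Delta> h) = sweedler \<Delta> (\<lambda>u v. sweedler \<Delta> (\<lambda>p q. F (p, q, v)) u) h"
  unfolding cop2_def fmap_def sweedler_def by (simp add: lext_comp tprod_gen_right split_def)

lemma lext_cop3:
  "lext F (cop3 \<Delta> h) = sweedler \<Delta> (\<lambda>u v. sweedler \<Delta> (\<lambda>y z. sweedler \<Delta> (\<lambda>p q. F (p, q, z, v)) y) u) h"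
  unfolding cop3_def lext_comp lext_cop2 fmap_def by (simp add: lext_comp sweedler_def split_def)

lemma eqmod_sweedler:
  "fs_subspace V \<Longrightarrow> (\<And>x y. eqmod V (\<Phi> x y) (\<Psi> x y)) \<Longrightarrow> eqmod V (sweedler \<Delta> \<Phi> h) (sweedler \<Delta> \<Psi> h)"
  unfolding sweedler_def by (rule eqmod_lext) auto

lemma lin_mod_sweedler_param:
  assumes V: "fs_subspace V" and lin: "\<And>x y. lin_mod sc V (\<lambda>t. \<Phi> t x y)"
  shows "lin_mod sc V (\<lambda>t. sweedler \<Delta> (\<Phi> t) h)"
  unfolding lin_mod_def sweedler_def lext_diff_fun[symmetric] lext_fsc_fun[symmetric]
  using lin unfolding lin_mod_def by (auto intro!: lext_mem V)

locale hopf_setting =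
  fixes scH :: "complex \<Rightarrow> 'h::ring_1 \<Rightarrow> 'h"
    and \<Delta> :: "'h \<Rightarrow> ('h \<times> 'h) fs"
    and \<epsilon> :: "'h \<Rightarrow> complex"
    and S :: "'h \<Rightarrow> 'h"
  assumes hopf: "hopf_algebra scH \<Delta> \<epsilon> S"
begin

abbreviation sw :: "('h \<Rightarrow> 'h \<Rightarrow> 'b fs) \<Rightarrow> 'h \<Rightarrow> 'b fs" where
  "sw \<equiv> sweedler \<Delta>"

abbreviation "T2 \<equiv> trel (lin_rel scH) (lin_rel scH)"

lemma algH: "alg_over_C scH"
  and coprod_add: "\<And>x y. \<Delta> (x + y) - (\<Delta> x + \<Delta> y) \<in> fspan T2"
  and coprod_scale: "\<And>c x. \<Delta> (scH c x) - fsc c (\<Delta> x) \<in> fspan T2"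
  and coprod_coassoc: "\<And>h. cop2 \<Delta> h - lext (\<lambda>(x, y). tprod (gen x) (\<Delta> y)) (\<Delta> h)
                              \<in> fspan (trel (lin_rel scH) T2)"
  and coprod_one: "\<Delta> 1 - gen (1, 1) \<in> fspan T2"
  and counit_left: "\<And>h. feval scH (fmap (\<lambda>(x, y). scH (\<epsilon> x) y) (\<Delta> h)) = h"
  and counit_right: "\<And>h. feval scH (fmap (\<lambda>(x, y). scH (\<epsilon> y) x) (\<Delta> h)) = h"
  and counit_add: "\<And>x y. \<epsilon> (x + y) = \<epsilon> x + \<epsilon> y"
  and counit_scale: "\<And>c x. \<epsilon> (scH c x) = c * \<epsilon> x"
  and antipode_add: "\<And>x y. S (x + y) = S x + S y"
  and antipode_scale: "\<And>c x. S (scH c x) = scH c (S x)"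
  and antipode_left: "\<And>h. feval scH (fmap (\<lambda>(x, y). S x * y) (\<Delta> h)) = scH (\<epsilon> h) 1"
  and antipode_right: "\<And>h. feval scH (fmap (\<lambda>(x, y). x * S y) (\<Delta> h)) = scH (\<epsilon> h) 1"
  using hopf unfolding hopf_algebra_def Let_def fequiv_def cop2_def by auto

lemma vsH: "vector_space scH"
  using algH unfolding alg_over_C_def by blast

lemma sc_linear_antipode: "sc_linear sc scH f \<Longrightarrow> sc_linear sc scH (\<lambda>t. S (f t))"
  unfolding sc_linear_def by (simp add: antipode_add antipode_scale)

lemmas sc_linear_H = sc_linear_id sc_linear_antipode
  sc_linear_mult_left[OF algH] sc_linear_mult_right[OF algH]

end

locale hopf_quotient = hopf_setting +
  fixes V :: "'b fs set"
  assumes subspace: "fs_subspace V"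
begin

lemmas eqmod_refl_V = eqmod_refl[OF subspace]
  and eqmod_sym_V = eqmod_sym[OF subspace]
  and eqmod_trans_V [trans] = eqmod_trans[OF subspace]

lemma eq_eqmod_trans [trans]: "x = y \<Longrightarrow> eqmod V y z \<Longrightarrow> eqmod V x z"
  and eqmod_eq_trans [trans]: "eqmod V x y \<Longrightarrow> y = z \<Longrightarrow> eqmod V x z"
  by simp_all

lemma sweedler_cong: "(\<And>x y. eqmod V (\<Phi> x y) (\<Psi> x y)) \<Longrightarrow> eqmod V (sw \<Phi> h) (sw \<Psi> h)"
  by (rule eqmod_sweedler[OF subspace])

lemma lin_mod_sweedler:
  assumes l1: "\<And>y. lin_mod scH V (\<lambda>x. \<Phi> x y)" and l2: "\<And>x. lin_mod scH V (\<Phi> x)"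
  shows "lin_mod scH V (sw \<Phi>)"
proof -
  have T2_mem: "lext (\<lambda>p. \<Phi> (fst p) (snd p)) r \<in> V" if "r \<in> T2" for r
    using that by (rule lext_trel_mem) (auto intro: lext_lin_rel_mem l1 l2)
  show ?thesis
    unfolding lin_mod_def
  proof (intro conjI allI)
    fix x y
    show "sw \<Phi> (x + y) - sw \<Phi> x - sw \<Phi> y \<in> V"
      using lext_fspan_mem[OF subspace T2_mem coprod_add[of x y]]
      by (simp add: sweedler_def lext_diff lext_add algebra_simps)
  next
    fix c x
    show "sw \<Phi> (scH c x) - fsc c (sw \<Phi> x) \<in> V"
      using lext_fspan_mem[OF subspace T2_mem coprod_scale[of c x]]
      by (simp add: sweedler_def lext_diff lext_fsc)
  qed
qed

lemma lin_mod_sweedler_comp: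
  "(\<And>y. lin_mod scH V (\<lambda>x. \<Phi> x y)) \<Longrightarrow> (\<And>x. lin_mod scH V (\<Phi> x)) \<Longrightarrow> sc_linear sc scH g
   \<Longrightarrow> lin_mod sc V (\<lambda>t. sw \<Phi> (g t))"
  by (rule lin_mod_comp[OF lin_mod_sweedler])

lemma lin_mod_counit_fsc: "lin_mod scH V (\<lambda>t. fsc (\<epsilon> t) X)"
  unfolding lin_mod_def by (simp add: counit_add counit_scale fsc_add_left fs_subspace_zero[OF subspace])

lemmas lin_mod_H_intros = lin_mod_sweedler lin_mod_sweedler_comp
  lin_mod_sweedler_param[OF subspace] lin_mod_counit_fsc lin_mod_fsc[OF subspace]

lemma sweedler_coassoc:
  assumes l1: "\<And>q v. lin_mod scH V (\<lambda>p. G p q v)"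
    and l2: "\<And>p v. lin_mod scH V (\<lambda>q. G p q v)"
    and l3: "\<And>p q. lin_mod scH V (\<lambda>v. G p q v)"
  shows "eqmod V (sw (\<lambda>u v. sw (\<lambda>p q. G p q v) u) h) (sw (\<lambda>u v. sw (\<lambda>p q. G u p q) v) h)"
proof -
  let ?F = "\<lambda>(x, y, z). G x y z"
  have T3_mem: "lext ?F r \<in> V" if "r \<in> trel (lin_rel scH) T2" for r
    using that
  proof (rule lext_trel_mem)
    fix w r assume "r \<in> lin_rel scH"
    then show "lext (\<lambda>x. ?F (x, w)) r \<in> V"
      by (simp add: split_def lext_lin_rel_mem[OF l1])
  next
    fix v r assume "r \<in> T2"
    then show "lext (\<lambda>y. ?F (v, y)) r \<in> V"
      by (rule lext_trel_mem) (simp_all add: split_def lext_lin_rel_mem[OF l2] lext_lin_rel_mem[OF l3])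
  qed
  show ?thesis
    using lext_fspan_mem[OF subspace T3_mem coprod_coassoc[of h]]
    unfolding eqmod_def lext_diff lext_cop2
    by (simp add: sweedler_def lext_comp tprod_gen_left split_def)
qed

lemma sweedler_counit_left:
  assumes G: "lin_mod scH V G"
  shows "eqmod V (sw (\<lambda>x y. fsc (\<epsilon> x) (G y)) h) (G h)"
proof -
  have "G h - lext (\<lambda>p. G (scH (\<epsilon> (fst p)) (snd p))) (\<Delta> h) \<in> V"
    using lin_mod_feval[OF subspace G vsH, of "\<lambda>(x, y). scH (\<epsilon> x) y" "\<Delta> h"] counit_left[of h]
    by (simp add: split_def)
  moreover have "lext (\<lambda>p. fsc (\<epsilon> (fst p)) (G (snd p)) - G (scH (\<epsilon> (fst p)) (snd p))) (\<Delta> h) \<in> V"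
    using G unfolding lin_mod_def
    by (intro lext_mem subspace) (metis subspace minus_diff_eq fs_subspace_uminus)
  ultimately show ?thesis
    unfolding eqmod_def sweedler_def lext_diff_fun using fs_subspace_diff[OF subspace] by fastforce
qed

lemma sweedler_counit_right:
  assumes G: "lin_mod scH V G"
  shows "eqmod V (sw (\<lambda>x y. fsc (\<epsilon> y) (G x)) h) (G h)"
proof -
  have "G h - lext (\<lambda>p. G (scH (\<epsilon> (snd p)) (fst p))) (\<Delta> h) \<in> V"
    using lin_mod_feval[OF subspace G vsH, of "\<lambda>(x, y). scH (\<epsilon> y) x" "\<Delta> h"] counit_right[of h]
    by (simp add: split_def)
  moreover have "lext (\<lambda>p. fsc (\<epsilon> (snd p)) (G (fst p)) - G (scH (\<epsilon> (snd p)) (fst p))) (\<Delta> h) \<in> V"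
    using G unfolding lin_mod_def
    by (intro lext_mem subspace) (metis subspace minus_diff_eq fs_subspace_uminus)
  ultimately show ?thesis
    unfolding eqmod_def sweedler_def lext_diff_fun using fs_subspace_diff[OF subspace] by fastforce
qed

lemma sweedler_antipode_left:
  assumes G: "lin_mod scH V G"
  shows "eqmod V (sw (\<lambda>x y. G (S x * y)) h) (fsc (\<epsilon> h) (G 1))"
proof -
  have "G (scH (\<epsilon> h) 1) - lext (\<lambda>p. G (S (fst p) * snd p)) (\<Delta> h) \<in> V"
    using lin_mod_feval[OF subspace G vsH, of "\<lambda>(x, y). S x * y" "\<Delta> h"] antipode_left[of h]
    by (simp add: split_def)
  moreover have "G (scH (\<epsilon> h) 1) - fsc (\<epsilon> h) (G 1) \<in> V"
    using G unfolding lin_mod_def by blast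
  ultimately show ?thesis
    unfolding eqmod_def sweedler_def using fs_subspace_diff[OF subspace] by fastforce
qed

lemma sweedler_antipode_right:
  assumes G: "lin_mod scH V G"
  shows "eqmod V (sw (\<lambda>x y. G (x * S y)) h) (fsc (\<epsilon> h) (G 1))"
proof -
  have "G (scH (\<epsilon> h) 1) - lext (\<lambda>p. G (fst p * S (snd p))) (\<Delta> h) \<in> V"
    using lin_mod_feval[OF subspace G vsH, of "\<lambda>(x, y). x * S y" "\<Delta> h"] antipode_right[of h]
    by (simp add: split_def)
  moreover have "G (scH (\<epsilon> h) 1) - fsc (\<epsilon> h) (G 1) \<in> V"
    using G unfolding lin_mod_def by blast
  ultimately show ?thesis
    unfolding eqmod_def sweedler_def using fs_subspace_diff[OF subspace] by fastforce
qed

lemma sweedler_one: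
  assumes "\<And>y. lin_mod scH V (\<lambda>x. \<Phi> x y)" "\<And>x. lin_mod scH V (\<Phi> x)"
  shows "eqmod V (sw \<Phi> 1) (\<Phi> 1 1)"
proof -
  have "lext (\<lambda>p. \<Phi> (fst p) (snd p)) r \<in> V" if "r \<in> T2" for r
    using that by (rule lext_trel_mem) (auto intro: lext_lin_rel_mem assms)
  from lext_fspan_mem[OF subspace this coprod_one] show ?thesis
    unfolding eqmod_def sweedler_def by (simp add: lext_diff)
qed

lemma sweedler2_one:
  assumes "\<And>q v. lin_mod scH V (\<lambda>p. G p q v)"
    and "\<And>p v. lin_mod scH V (\<lambda>q. G p q v)"
    and "\<And>p q. lin_mod scH V (\<lambda>v. G p q v)"
  shows "eqmod V (sw (\<lambda>u v. sw (\<lambda>p q. G p q v) u) 1) (G 1 1 1)"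
proof -
  have "eqmod V (sw (\<lambda>u v. sw (\<lambda>p q. G p q v) u) 1) (sw (\<lambda>p q. G p q 1) 1)"
    by (rule sweedler_one) (auto intro!: lin_mod_H_intros assms)
  also have "eqmod V \<dots> (G 1 1 1)"
    by (rule sweedler_one) (auto intro!: assms)
  finally show ?thesis .
qed

lemma sweedler_antipode_cancel_left:
  assumes l1: "\<And>w. lin_mod scH V (\<lambda>u. \<Phi> u w)" and l2: "\<And>u. lin_mod scH V (\<Phi> u)"
  shows "eqmod V (sw (\<lambda>x v. sw (\<lambda>u z. \<Phi> u (S z * v)) x) h) (\<Phi> h 1)"
proof -
  have "eqmod V (sw (\<lambda>x v. sw (\<lambda>u z. \<Phi> u (S z * v)) x) h) (sw (\<lambda>u x. sw (\<lambda>z v. \<Phi> u (S z * v)) x) h)"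
    by (rule sweedler_coassoc) (intro l1 lin_mod_comp[OF l2] sc_linear_H)+
  also have "eqmod V \<dots> (sw (\<lambda>u x. fsc (\<epsilon> x) (\<Phi> u 1)) h)"
    by (intro sweedler_cong sweedler_antipode_left l2)
  also have "eqmod V \<dots> (\<Phi> h 1)"
    by (intro sweedler_counit_right l1)
  finally show ?thesis .
qed

lemma sweedler_antipode_cancel_right:
  assumes l1: "\<And>w. lin_mod scH V (\<lambda>u. \<Phi> u w)" and l2: "\<And>u. lin_mod scH V (\<Phi> u)"
  shows "eqmod V (sw (\<lambda>x v. sw (\<lambda>u z. \<Phi> u (z * S v)) x) h) (\<Phi> h 1)"
proof -
  have "eqmod V (sw (\<lambda>x v. sw (\<lambda>u z. \<Phi> u (z * S v)) x) h) (sw (\<lambda>u x. sw (\<lambda>z v. \<Phi> u (z * S v)) x) h)"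
    by (rule sweedler_coassoc) (intro l1 lin_mod_comp[OF l2] sc_linear_H)+
  also have "eqmod V \<dots> (sw (\<lambda>u x. fsc (\<epsilon> x) (\<Phi> u 1)) h)"
    by (intro sweedler_cong sweedler_antipode_right l2)
  also have "eqmod V \<dots> (\<Phi> h 1)"
    by (intro sweedler_counit_right l1)
  finally show ?thesis .
qed

lemma sweedler_antipode_cancel3_left:
  assumes "\<And>f x y z. sc_linear scH scH f \<Longrightarrow> lin_mod scH V (\<lambda>t. G (f t) x y z)"
    and "\<And>f k y z. sc_linear scH scH f \<Longrightarrow> lin_mod scH V (\<lambda>t. G k (f t) y z)"
    and "\<And>f k x z. sc_linear scH scH f \<Longrightarrow> lin_mod scH V (\<lambda>t. G k x (f t) z)"
    and "\<And>f k x y. sc_linear scH scH f \<Longrightarrow> lin_mod scH V (\<lambda>t. G k x y (f t))"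
  shows "eqmod V (sw (\<lambda>u k7. sw (\<lambda>y k6. sw (\<lambda>x k5. sw (\<lambda>u' k4. sw (\<lambda>y' k3. sw (\<lambda>k1 k2.
           G k1 (S k2 * k7) (S k3 * k6) (S k4 * k5)) y') u') x) y) u) h) (G h 1 1 1)"
proof -
  note lin = assms lin_mod_H_intros sc_linear_H
  have inner: "eqmod V (sw (\<lambda>x k5. sw (\<lambda>u' k4. sw (\<lambda>y' k3. sw (\<lambda>k1 k2.
                   G k1 (S k2 * k7) (S k3 * k6) (S k4 * k5)) y') u') x) y)
                 (sw (\<lambda>y' k3. sw (\<lambda>k1 k2. G k1 (S k2 * k7) (S k3 * k6) 1) y') y)" for y k6 k7
    by (rule sweedler_antipode_cancel_left
          [where \<Phi> = "\<lambda>u' w. sw (\<lambda>y' k3. sw (\<lambda>k1 k2. G k1 (S k2 * k7) (S k3 * k6) w) y') u'"])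
       (intro lin | assumption)+
  have middle: "eqmod V (sw (\<lambda>y k6. sw (\<lambda>y' k3. sw (\<lambda>k1 k2. G k1 (S k2 * k7) (S k3 * k6) 1) y') y) u)
                  (sw (\<lambda>k1 k2. G k1 (S k2 * k7) 1 1) u)" for u k7
    by (rule sweedler_antipode_cancel_left[where \<Phi> = "\<lambda>y' w. sw (\<lambda>k1 k2. G k1 (S k2 * k7) w 1) y'"])
       (intro lin | assumption)+
  have "eqmod V (sw (\<lambda>u k7. sw (\<lambda>y k6. sw (\<lambda>x k5. sw (\<lambda>u' k4. sw (\<lambda>y' k3. sw (\<lambda>k1 k2.
           G k1 (S k2 * k7) (S k3 * k6) (S k4 * k5)) y') u') x) y) u) h)
          (sw (\<lambda>u k7. sw (\<lambda>y k6. sw (\<lambda>y' k3. sw (\<lambda>k1 k2. G k1 (S k2 * k7) (S k3 * k6) 1) y') y) u) h)"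
    by (intro sweedler_cong inner)
  also have "eqmod V \<dots> (sw (\<lambda>u k7. sw (\<lambda>k1 k2. G k1 (S k2 * k7) 1 1) u) h)"
    by (intro sweedler_cong middle)
  also have "eqmod V \<dots> (G h 1 1 1)"
    by (rule sweedler_antipode_cancel_left[where \<Phi> = "\<lambda>k1 w. G k1 w 1 1"]) (intro lin | assumption)+
  finally show ?thesis .
qed

lemma sweedler_antipode_cancel3_right:
  assumes "\<And>f x y z. sc_linear scH scH f \<Longrightarrow> lin_mod scH V (\<lambda>t. G (f t) x y z)"
    and "\<And>f k y z. sc_linear scH scH f \<Longrightarrow> lin_mod scH V (\<lambda>t. G k (f t) y z)"
    and "\<And>f k x z. sc_linear scH scH f \<Longrightarrow> lin_mod scH V (\<lambda>t. G k x (f t) z)"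
    and "\<And>f k x y. sc_linear scH scH f \<Longrightarrow> lin_mod scH V (\<lambda>t. G k x y (f t))"
  shows "eqmod V (sw (\<lambda>u k7. sw (\<lambda>y k6. sw (\<lambda>x k5. sw (\<lambda>u' k4. sw (\<lambda>y' k3. sw (\<lambda>k1 k2.
           G k1 (k2 * S k7) (k3 * S k6) (k4 * S k5)) y') u') x) y) u) h) (G h 1 1 1)"
proof -
  note lin = assms lin_mod_H_intros sc_linear_H
  have inner: "eqmod V (sw (\<lambda>x k5. sw (\<lambda>u' k4. sw (\<lambda>y' k3. sw (\<lambda>k1 k2.
                   G k1 (k2 * S k7) (k3 * S k6) (k4 * S k5)) y') u') x) y)
                 (sw (\<lambda>y' k3. sw (\<lambda>k1 k2. G k1 (k2 * S k7) (k3 * S k6) 1) y') y)" for y k6 k7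
    by (rule sweedler_antipode_cancel_right
          [where \<Phi> = "\<lambda>u' w. sw (\<lambda>y' k3. sw (\<lambda>k1 k2. G k1 (k2 * S k7) (k3 * S k6) w) y') u'"])
       (intro lin | assumption)+
  have middle: "eqmod V (sw (\<lambda>y k6. sw (\<lambda>y' k3. sw (\<lambda>k1 k2. G k1 (k2 * S k7) (k3 * S k6) 1) y') y) u)
                  (sw (\<lambda>k1 k2. G k1 (k2 * S k7) 1 1) u)" for u k7
    by (rule sweedler_antipode_cancel_right[where \<Phi> = "\<lambda>y' w. sw (\<lambda>k1 k2. G k1 (k2 * S k7) w 1) y'"])
       (intro lin | assumption)+
  have "eqmod V (sw (\<lambda>u k7. sw (\<lambda>y k6. sw (\<lambda>x k5. sw (\<lambda>u' k4. sw (\<lambda>y' k3. sw (\<lambda>k1 k2.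
           G k1 (k2 * S k7) (k3 * S k6) (k4 * S k5)) y') u') x) y) u) h)
          (sw (\<lambda>u k7. sw (\<lambda>y k6. sw (\<lambda>y' k3. sw (\<lambda>k1 k2. G k1 (k2 * S k7) (k3 * S k6) 1) y') y) u) h)"
    by (intro sweedler_cong inner)
  also have "eqmod V \<dots> (sw (\<lambda>u k7. sw (\<lambda>k1 k2. G k1 (k2 * S k7) 1 1) u) h)"
    by (intro sweedler_cong middle)
  also have "eqmod V \<dots> (G h 1 1 1)"
    by (rule sweedler_antipode_cancel_right[where \<Phi> = "\<lambda>k1 w. G k1 w 1 1"]) (intro lin | assumption)+
  finally show ?thesis .
qed

end

section \<open>The Galois map of \<open>A \<rtimes> H \<ltimes> A\<^sup>o\<^sup>p\<close> and its inverse\<close>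

locale cm_setting = hopf_setting +
  fixes scA :: "complex \<Rightarrow> 'm::ring_1 \<Rightarrow> 'm"
    and act
  assumes modalg: "module_algebra scH \<Delta> \<epsilon> scA act"
begin

lemma algA: "alg_over_C scA"
  and act_add_left: "\<And>x y a. act (x + y) a = act x a + act y a"
  and act_scale_left: "\<And>c x a. act (scH c x) a = scA c (act x a)"
  and act_add_right: "\<And>h a b. act h (a + b) = act h a + act h b"
  and act_scale_right: "\<And>h c a. act h (scA c a) = scA c (act h a)"
  and act_mult: "\<And>x y a. act (x * y) a = act x (act y a)"
  and act_one: "\<And>a. act 1 a = a"
  and act_prod: "\<And>h a b. act h (a * b) = feval scA (fmap (\<lambda>(x, y). act x a * act y b) (\<Delta> h))"
  and act_unit: "\<And>h. act h 1 = scA (\<epsilon> h) 1"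
  using modalg unfolding module_algebra_def by auto

lemma vsA: "vector_space scA"
  using algA unfolding alg_over_C_def by blast

lemma act_unit_mult: "a * act h 1 = scA (\<epsilon> h) a"
  using algA unfolding alg_over_C_def by (metis act_unit mult.right_neutral)

lemma sc_linear_act_left: "sc_linear sc scH f \<Longrightarrow> sc_linear sc scA (\<lambda>t. act (f t) a)"
  unfolding sc_linear_def by (simp add: act_add_left act_scale_left)

lemma sc_linear_act_right: "sc_linear sc scA f \<Longrightarrow> sc_linear sc scA (\<lambda>t. act x (f t))"
  unfolding sc_linear_def by (simp add: act_add_right act_scale_right)

lemmas sc_linear_intros = sc_linear_H sc_linear_act_left sc_linear_act_right
  sc_linear_mult_left[OF algA] sc_linear_mult_right[OF algA]

abbreviation "CR \<equiv> cm_rel scA scH"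

text \<open>The relations of \<open>(A \<otimes> H \<otimes> A) \<otimes>\<^sub>\<complex> (A \<otimes> H \<otimes> A)\<close>, contained in both balanced tensor products.\<close>

abbreviation "TT \<equiv> trel CR CR"

lemma TT_slots:
  "r \<in> lin_rel scA \<Longrightarrow> lext (\<lambda>x. gen ((x, h, b), k)) r \<in> TT"
  "s \<in> lin_rel scH \<Longrightarrow> lext (\<lambda>x. gen ((a, x, b), k)) s \<in> TT"
  "r \<in> lin_rel scA \<Longrightarrow> lext (\<lambda>x. gen ((a, h, x), k)) r \<in> TT"
  "r \<in> lin_rel scA \<Longrightarrow> lext (\<lambda>x. gen (k, (x, h, b))) r \<in> TT"
  "s \<in> lin_rel scH \<Longrightarrow> lext (\<lambda>x. gen (k, (a, x, b))) s \<in> TT"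
  "r \<in> lin_rel scA \<Longrightarrow> lext (\<lambda>x. gen (k, (a, h, x))) r \<in> TT"
proof -
  have CR:
    "r \<in> lin_rel scA \<Longrightarrow> tprod r (gen (h, b)) \<in> CR"
    "s \<in> lin_rel scH \<Longrightarrow> tprod (gen a) (tprod s (gen b)) \<in> CR"
    "r \<in> lin_rel scA \<Longrightarrow> tprod (gen a) (tprod (gen h) r) \<in> CR" for r s a h b
    unfolding cm_rel_def trel_def by blast+
  have TT: "q \<in> CR \<Longrightarrow> tprod q (gen k) \<in> TT" "q \<in> CR \<Longrightarrow> tprod (gen k) q \<in> TT" for q k
    unfolding trel_def[of CR] by blast+
  note simps = tprod_gen_right tprod_gen_left lext_comp
  show "r \<in> lin_rel scA \<Longrightarrow> lext (\<lambda>x. gen ((x, h, b), k)) r \<in> TT"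
    using TT(1)[OF CR(1)] by (simp add: simps)
  show "s \<in> lin_rel scH \<Longrightarrow> lext (\<lambda>x. gen ((a, x, b), k)) s \<in> TT"
    using TT(1)[OF CR(2)] by (simp add: simps)
  show "r \<in> lin_rel scA \<Longrightarrow> lext (\<lambda>x. gen ((a, h, x), k)) r \<in> TT"
    using TT(1)[OF CR(3)] by (simp add: simps)
  show "r \<in> lin_rel scA \<Longrightarrow> lext (\<lambda>x. gen (k, (x, h, b))) r \<in> TT"
    using TT(2)[OF CR(1)] by (simp add: simps)
  show "s \<in> lin_rel scH \<Longrightarrow> lext (\<lambda>x. gen (k, (a, x, b))) s \<in> TT"
    using TT(2)[OF CR(2)] by (simp add: simps)
  show "r \<in> lin_rel scA \<Longrightarrow> lext (\<lambda>x. gen (k, (a, h, x))) r \<in> TT"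
    using TT(2)[OF CR(3)] by (simp add: simps)
qed

lemma lext_cm_rel_mem:
  assumes "r \<in> CR"
    and "\<And>h b. lin_mod scA V (\<lambda>t. F t h b)"
    and "\<And>a b. lin_mod scH V (\<lambda>t. F a t b)"
    and "\<And>a h. lin_mod scA V (\<lambda>t. F a h t)"
  shows "lext (\<lambda>(a, h, b). F a h b) r \<in> V"
  using assms(1) unfolding cm_rel_def
proof (rule lext_trel_mem)
  fix w r assume "r \<in> lin_rel scA"
  then show "lext (\<lambda>x. case (x, w) of (a, h, b) \<Rightarrow> F a h b) r \<in> V"
    by (simp add: split_def lext_lin_rel_mem[OF assms(2)])
next
  fix v r assume "r \<in> trel (lin_rel scH) (lin_rel scA)"
  then show "lext (\<lambda>y. case (v, y) of (a, h, b) \<Rightarrow> F a h b) r \<in> V"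
    by (rule lext_trel_mem) (simp_all add: split_def lext_lin_rel_mem[OF assms(3)] lext_lin_rel_mem[OF assms(4)])
qed

lemma lext_TT_mem:
  assumes "r \<in> TT"
    and "\<And>h b a' h' b'. lin_mod scA V (\<lambda>t. F t h b a' h' b')"
    and "\<And>a b a' h' b'. lin_mod scH V (\<lambda>t. F a t b a' h' b')"
    and "\<And>a h a' h' b'. lin_mod scA V (\<lambda>t. F a h t a' h' b')"
    and "\<And>a h b h' b'. lin_mod scA V (\<lambda>t. F a h b t h' b')"
    and "\<And>a h b a' b'. lin_mod scH V (\<lambda>t. F a h b a' t b')"
    and "\<And>a h b a' h'. lin_mod scA V (\<lambda>t. F a h b a' h' t)"
  shows "lext (\<lambda>((a, h, b), (a', h', b')). F a h b a' h' b') r \<in> V"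
  using assms(1) apply (rule lext_trel_mem)
  subgoal for w r
    using lext_cm_rel_mem[where F = "\<lambda>a h b. F a h b (fst w) (fst (snd w)) (snd (snd w))"] assms(2-4)
    by (simp add: split_def)
  subgoal for v r
    using lext_cm_rel_mem[where F = "\<lambda>a' h' b'. F (fst v) (fst (snd v)) (snd (snd v)) a' h' b'"] assms(5-7)
    by (simp add: split_def)
  done

lemma cm_mult_gen:
  "cm_mult \<Delta> act (gen (a, h, b)) (gen (a', h', b')) =
   sw (\<lambda>u v. sw (\<lambda>p q. gen (a * act p a', q * h', act v b' * b)) u) h"
  by (simp add: cm_mult_def lext_cop2)

lemma cm_mult_add_left: "cm_mult \<Delta> act (f + g) k = cm_mult \<Delta> act f k + cm_mult \<Delta> act g k"
  and cm_mult_add_right: "cm_mult \<Delta> act k (f + g) = cm_mult \<Delta> act k f + cm_mult \<Delta> act k g"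
  and cm_mult_fsc_left: "cm_mult \<Delta> act (fsc c f) k = fsc c (cm_mult \<Delta> act f k)"
  and cm_mult_fsc_right: "cm_mult \<Delta> act k (fsc c f) = fsc c (cm_mult \<Delta> act k f)"
  unfolding cm_mult_def by (rule bext_add_left bext_add_right bext_fsc_left bext_fsc_right)+

definition cm_nu_term where
  "cm_nu_term a h b a' h' b' =
     sw (\<lambda>u v. sw (\<lambda>y z. sw (\<lambda>p q. gen ((a, p, 1), (act q a', z * h', act v b' * b))) y) u) h"

text \<open>The nested sums run over \<open>h\<^sub>1 h\<^sub>2 h\<^sub>3 h\<^sub>4 = p q z v\<close>.\<close>

definition cm_nu_inv_term where
  "cm_nu_inv_term a h b a' h' b' =
     sw (\<lambda>u v. sw (\<lambda>y z. sw (\<lambda>p q. gen ((a, p, 1), (act (S v) (b * a'), S z * h', act (S q) b'))) y) u) h"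

definition cm_nu_inv where
  "cm_nu_inv = lext (\<lambda>((a, h, b), (a', h', b')). cm_nu_inv_term a h b a' h' b')"

lemma cm_nu_eq: "cm_nu \<Delta> act = lext (\<lambda>((a, h, b), (a', h', b')). cm_nu_term a h b a' h' b')"
  unfolding cm_nu_def cm_nu_term_def
  by (rule arg_cong[where f = lext], rule ext) (auto simp: lext_cop3 split: prod.splits)

lemma cm_nu_gen: "cm_nu \<Delta> act (gen ((a, h, b), (a', h', b'))) = cm_nu_term a h b a' h' b'"
  unfolding cm_nu_eq by simp

lemma cm_nu_inv_gen: "cm_nu_inv (gen ((a, h, b), (a', h', b'))) = cm_nu_inv_term a h b a' h' b'"
  unfolding cm_nu_inv_def by simp

lemma cm_nu_sweedler: "cm_nu \<Delta> act (sw \<Phi> h) = sw (\<lambda>x y. cm_nu \<Delta> act (\<Phi> x y)) h"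
  unfolding cm_nu_def by (rule lext_sweedler)

lemma cm_nu_inv_sweedler: "cm_nu_inv (sw \<Phi> h) = sw (\<lambda>x y. cm_nu_inv (\<Phi> x y)) h"
  unfolding cm_nu_inv_def by (rule lext_sweedler)

lemma cm_nu_add: "cm_nu \<Delta> act (x + y) = cm_nu \<Delta> act x + cm_nu \<Delta> act y"
  and cm_nu_diff: "cm_nu \<Delta> act (x - y) = cm_nu \<Delta> act x - cm_nu \<Delta> act y"
  and cm_nu_fsc: "cm_nu \<Delta> act (fsc c x) = fsc c (cm_nu \<Delta> act x)"
  and cm_nu_zero: "cm_nu \<Delta> act 0 = 0"
  unfolding cm_nu_def by (rule lext_add lext_diff lext_fsc lext_zero)+

lemma cm_nu_inv_add: "cm_nu_inv (x + y) = cm_nu_inv x + cm_nu_inv y"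
  and cm_nu_inv_diff: "cm_nu_inv (x - y) = cm_nu_inv x - cm_nu_inv y"
  and cm_nu_inv_fsc: "cm_nu_inv (fsc c x) = fsc c (cm_nu_inv x)"
  and cm_nu_inv_zero: "cm_nu_inv 0 = 0"
  unfolding cm_nu_inv_def by (rule lext_add lext_diff lext_fsc lext_zero)+

end

locale cm_quotient = cm_setting + hopf_quotient +
  assumes TT_subset: "TT \<subseteq> V"
begin

lemma lin_mod_slots:
  "sc_linear sc scA f \<Longrightarrow> lin_mod sc V (\<lambda>t. gen ((f t, h, b), k))"
  "sc_linear sc scH g \<Longrightarrow> lin_mod sc V (\<lambda>t. gen ((a, g t, b), k))"
  "sc_linear sc scA f \<Longrightarrow> lin_mod sc V (\<lambda>t. gen ((a, h, f t), k))"
  "sc_linear sc scA f \<Longrightarrow> lin_mod sc V (\<lambda>t. gen (k, (f t, h, b)))"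
  "sc_linear sc scH g \<Longrightarrow> lin_mod sc V (\<lambda>t. gen (k, (a, g t, b)))"
  "sc_linear sc scA f \<Longrightarrow> lin_mod sc V (\<lambda>t. gen (k, (a, h, f t)))"
proof -
  note slot = lin_mod_comp[OF lin_mod_gen[OF subsetD[OF TT_subset]]]
  show "sc_linear sc scA f \<Longrightarrow> lin_mod sc V (\<lambda>t. gen ((f t, h, b), k))"
    by (rule slot[where f = f]) (auto intro: TT_slots)
  show "sc_linear sc scH g \<Longrightarrow> lin_mod sc V (\<lambda>t. gen ((a, g t, b), k))"
    by (rule slot[where f = g]) (auto intro: TT_slots)
  show "sc_linear sc scA f \<Longrightarrow> lin_mod sc V (\<lambda>t. gen ((a, h, f t), k))"
    by (rule slot[where f = f]) (auto intro: TT_slots)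
  show "sc_linear sc scA f \<Longrightarrow> lin_mod sc V (\<lambda>t. gen (k, (f t, h, b)))"
    by (rule slot[where f = f]) (auto intro: TT_slots)
  show "sc_linear sc scH g \<Longrightarrow> lin_mod sc V (\<lambda>t. gen (k, (a, g t, b)))"
    by (rule slot[where f = g]) (auto intro: TT_slots)
  show "sc_linear sc scA f \<Longrightarrow> lin_mod sc V (\<lambda>t. gen (k, (a, h, f t)))"
    by (rule slot[where f = f]) (auto intro: TT_slots)
qed

lemmas lin_mod_intros = lin_mod_H_intros lin_mod_slots sc_linear_intros

lemma lin_mod_cm_nu_term:
  "sc_linear sc scA f \<Longrightarrow> lin_mod sc V (\<lambda>t. cm_nu_term (f t) h b a' h' b')"
  "sc_linear sc scH g \<Longrightarrow> lin_mod sc V (\<lambda>t. cm_nu_term a (g t) b a' h' b')"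
  "sc_linear sc scA f \<Longrightarrow> lin_mod sc V (\<lambda>t. cm_nu_term a h (f t) a' h' b')"
  "sc_linear sc scA f \<Longrightarrow> lin_mod sc V (\<lambda>t. cm_nu_term a h b (f t) h' b')"
  "sc_linear sc scH g \<Longrightarrow> lin_mod sc V (\<lambda>t. cm_nu_term a h b a' (g t) b')"
  "sc_linear sc scA f \<Longrightarrow> lin_mod sc V (\<lambda>t. cm_nu_term a h b a' h' (f t))"
  unfolding cm_nu_term_def by (intro lin_mod_intros | assumption)+

lemma lin_mod_cm_nu_inv_term:
  "sc_linear sc scA f \<Longrightarrow> lin_mod sc V (\<lambda>t. cm_nu_inv_term (f t) h b a' h' b')"
  "sc_linear sc scH g \<Longrightarrow> lin_mod sc V (\<lambda>t. cm_nu_inv_term a (g t) b a' h' b')"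
  "sc_linear sc scA f \<Longrightarrow> lin_mod sc V (\<lambda>t. cm_nu_inv_term a h (f t) a' h' b')"
  "sc_linear sc scA f \<Longrightarrow> lin_mod sc V (\<lambda>t. cm_nu_inv_term a h b (f t) h' b')"
  "sc_linear sc scH g \<Longrightarrow> lin_mod sc V (\<lambda>t. cm_nu_inv_term a h b a' (g t) b')"
  "sc_linear sc scA f \<Longrightarrow> lin_mod sc V (\<lambda>t. cm_nu_inv_term a h b a' h' (f t))"
  unfolding cm_nu_inv_term_def by (intro lin_mod_intros | assumption)+

lemma cm_nu_TT: "r \<in> TT \<Longrightarrow> cm_nu \<Delta> act r \<in> V"
  unfolding cm_nu_eq by (rule lext_TT_mem) (assumption | rule lin_mod_cm_nu_term[OF sc_linear_id])+

lemma cm_nu_inv_TT: "r \<in> TT \<Longrightarrow> cm_nu_inv r \<in> V"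
  unfolding cm_nu_inv_def by (rule lext_TT_mem) (assumption | rule lin_mod_cm_nu_inv_term[OF sc_linear_id])+

lemma sweedler_act_prod:
  assumes "lin_mod scA V G"
  shows "eqmod V (G (act h (a * b))) (sw (\<lambda>x y. G (act x a * act y b)) h)"
  using lin_mod_feval[OF subspace assms vsA, of "\<lambda>(x, y). act x a * act y b" "\<Delta> h"]
  unfolding eqmod_def sweedler_def act_prod by (simp add: split_def)

end

section \<open>Bijectivity of the Galois map\<close>

context cm_setting
begin

abbreviation "VA \<equiv> fspan (cm_tens_A_rel scA scH \<Delta> act)"
abbreviation "Vop \<equiv> fspan (cm_tens_Aop_rel scA scH \<Delta> act)"

interpretation A: cm_quotient scH \<Delta> \<epsilon> S scA act VA
  by unfold_locales (auto simp: fs_subspace_fspan cm_tens_A_rel_def intro: fspan_base)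

interpretation Aop: cm_quotient scH \<Delta> \<epsilon> S scA act Vop
  by unfold_locales (auto simp: fs_subspace_fspan cm_tens_Aop_rel_def intro: fspan_base)

lemmas A_intros = A.lin_mod_intros A.lin_mod_cm_nu_term A.lin_mod_cm_nu_inv_term
lemmas Aop_intros = Aop.lin_mod_intros Aop.lin_mod_cm_nu_term Aop.lin_mod_cm_nu_inv_term

lemmas bilinear_simps = cm_nu_add cm_nu_diff cm_nu_fsc cm_nu_inv_add cm_nu_inv_diff cm_nu_inv_fsc
  cm_mult_add_left cm_mult_add_right cm_mult_fsc_left cm_mult_fsc_right
  tprod_add_left tprod_add_right tprod_fsc_left tprod_fsc_right fsc_add_right fsc_diff_right

lemma VA_balanced:
  "eqmod VA (tprod (cm_mult \<Delta> act (cm_target c) k) k') (tprod k (cm_mult \<Delta> act (cm_source c) k'))"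
  unfolding eqmod_def by (rule fspan_base) (auto simp: cm_tens_A_rel_def)

lemma Vop_balanced:
  "eqmod Vop (tprod (cm_mult \<Delta> act k (cm_target c)) k') (tprod k (cm_mult \<Delta> act (cm_target c) k'))"
  unfolding eqmod_def by (rule fspan_base) (auto simp: cm_tens_Aop_rel_def)

lemma cm_nu_mult_target_gen:
  "eqmod VA (cm_nu \<Delta> act (tprod (cm_mult \<Delta> act (gen (a, h, b)) (cm_target c)) (gen (a', h', b'))))
     (sw (\<lambda>u v. sw (\<lambda>u' w. sw (\<lambda>y z. sw (\<lambda>p q.
              gen ((a, p, 1), (act q a', z * h', act w b' * act v c * b))) y) u') u) h)"
proof -
  have "cm_nu \<Delta> act (tprod (cm_mult \<Delta> act (gen (a, h, b)) (cm_target c)) (gen (a', h', b')))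
      = sw (\<lambda>u v. sw (\<lambda>p q. cm_nu_term (scA (\<epsilon> p) a) q (act v c * b) a' h' b') u) h"
    by (simp add: cm_target_def cm_mult_gen tprod_sweedler_left cm_nu_sweedler cm_nu_gen act_unit_mult)
  also have "eqmod VA \<dots> (sw (\<lambda>u v. sw (\<lambda>p q. fsc (\<epsilon> p) (cm_nu_term a q (act v c * b) a' h' b')) u) h)"
    using A.lin_mod_cm_nu_term(1)[OF sc_linear_id]
    by (intro A.sweedler_cong) (simp add: lin_mod_def eqmod_def)
  also have "eqmod VA \<dots> (sw (\<lambda>u v. cm_nu_term a u (act v c * b) a' h' b') h)"
    by (intro A.sweedler_cong A.sweedler_counit_left A_intros)
  also have "\<dots> = (sw (\<lambda>u v. sw (\<lambda>u' w. sw (\<lambda>y z. sw (\<lambda>p q.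
              gen ((a, p, 1), (act q a', z * h', act w b' * act v c * b))) y) u') u) h)"
    by (simp add: cm_nu_term_def mult.assoc)
  finally show ?thesis .
qed

lemma cm_nu_target_mult_gen:
  "eqmod VA (cm_nu \<Delta> act (tprod (gen (a, h, b)) (cm_mult \<Delta> act (cm_target c) (gen (a', h', b')))))
     (sw (\<lambda>u v. sw (\<lambda>u' w. sw (\<lambda>y z. sw (\<lambda>p q.
              gen ((a, p, 1), (act q a', z * h', act w b' * act v c * b))) y) u') u) h)"
proof -
  let ?T = "\<lambda>w v u. sw (\<lambda>y z. sw (\<lambda>p q. gen ((a, p, 1), (act q a', z * h', act w b' * act v c * b))) y) u"
  have act_prod_inner: "eqmod VA (sw (\<lambda>y z. sw (\<lambda>p q. gen ((a, p, 1), (act q a', z * h', act v (b' * c) * b))) y) u)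
                                 (sw (\<lambda>w v. ?T w v u) v)" for u v
    by (rule A.sweedler_act_prod
          [where G = "\<lambda>w. sw (\<lambda>y z. sw (\<lambda>p q. gen ((a, p, 1), (act q a', z * h', w * b))) y) u"])
       (intro A_intros)+
  have "cm_nu \<Delta> act (tprod (gen (a, h, b)) (cm_mult \<Delta> act (cm_target c) (gen (a', h', b'))))
      = sw (\<lambda>u v. sw (\<lambda>p q. cm_nu_term a h b (act p a') (q * h') (act v b' * c)) u) 1"
    by (simp add: cm_target_def cm_mult_gen tprod_sweedler_right cm_nu_sweedler cm_nu_gen)
  also have "eqmod VA \<dots> (cm_nu_term a h b (act 1 a') (1 * h') (act 1 b' * c))"
    by (rule A.sweedler2_one) (intro A_intros)+
  also have "\<dots> = sw (\<lambda>u v. sw (\<lambda>y z. sw (\<lambda>p q. gen ((a, p, 1), (act q a', z * h', act v (b' * c) * b))) y) u) h"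
    by (simp add: cm_nu_term_def act_one)
  also have "eqmod VA \<dots> (sw (\<lambda>u v. sw (\<lambda>w v'. ?T w v' u) v) h)"
    by (intro A.sweedler_cong act_prod_inner)
  also have "eqmod VA \<dots> (sw (\<lambda>u v. sw (\<lambda>u' w. sw (\<lambda>y z. sw (\<lambda>p q.
              gen ((a, p, 1), (act q a', z * h', act w b' * act v c * b))) y) u') u) h)"
    by (rule A.eqmod_sym_V, rule A.sweedler_coassoc) (intro A_intros)+
  finally show ?thesis .
qed

lemma cm_nu_Aop_balanced_gen:
  "eqmod VA (cm_nu \<Delta> act (tprod (cm_mult \<Delta> act (gen (a, h, b)) (cm_target c)) (gen (a', h', b'))))
            (cm_nu \<Delta> act (tprod (gen (a, h, b)) (cm_mult \<Delta> act (cm_target c) (gen (a', h', b')))))"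
  using A.eqmod_trans_V[OF cm_nu_mult_target_gen A.eqmod_sym_V[OF cm_nu_target_mult_gen]] .

lemma cm_nu_Aop_rel:
  assumes "r \<in> cm_tens_Aop_rel scA scH \<Delta> act"
  shows "cm_nu \<Delta> act r \<in> VA"
proof -
  from assms consider "r \<in> TT"
    | c k k' where "r = tprod (cm_mult \<Delta> act k (cm_target c)) k' - tprod k (cm_mult \<Delta> act (cm_target c) k')"
    unfolding cm_tens_Aop_rel_def by blast
  then show ?thesis
  proof cases
    case 2
    have "cm_nu \<Delta> act (tprod (cm_mult \<Delta> act k (cm_target c)) k')
          - cm_nu \<Delta> act (tprod k (cm_mult \<Delta> act (cm_target c) k')) \<in> VA"
    proof (rule bilinear_mem[OF A.subspace, where B = "\<lambda>k k'. cm_nu \<Delta> act (tprod (cm_mult \<Delta> act k (cm_target c)) k')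
                                   - cm_nu \<Delta> act (tprod k (cm_mult \<Delta> act (cm_target c) k'))"])
      fix x y
      show "cm_nu \<Delta> act (tprod (cm_mult \<Delta> act (gen x) (cm_target c)) (gen y))
            - cm_nu \<Delta> act (tprod (gen x) (cm_mult \<Delta> act (cm_target c) (gen y))) \<in> VA"
        using cm_nu_Aop_balanced_gen unfolding eqmod_def by (cases x, cases y) simp
    qed (simp_all add: bilinear_simps algebra_simps)
    with 2 show ?thesis by (simp add: cm_nu_diff)
  qed (rule A.cm_nu_TT)
qed

lemma cm_nu_eqmod: "eqmod Vop x y \<Longrightarrow> eqmod VA (cm_nu \<Delta> act x) (cm_nu \<Delta> act y)"
  using lext_fspan_mem[OF A.subspace cm_nu_Aop_rel[unfolded cm_nu_def]]
  unfolding eqmod_def cm_nu_diff[symmetric] unfolding cm_nu_def .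

lemma cm_nu_inv_A_balanced_gen:
  "eqmod Vop (cm_nu_inv (tprod (cm_mult \<Delta> act (cm_target c) (gen (a, h, b))) (gen (a', h', b'))))
             (cm_nu_inv (tprod (gen (a, h, b)) (cm_mult \<Delta> act (cm_source c) (gen (a', h', b')))))"
proof -
  have "cm_nu_inv (tprod (cm_mult \<Delta> act (cm_target c) (gen (a, h, b))) (gen (a', h', b')))
      = sw (\<lambda>u v. sw (\<lambda>p q. cm_nu_inv_term (act p a) (q * h) (act v b * c) a' h' b') u) 1"
    by (simp add: cm_target_def cm_mult_gen tprod_sweedler_left cm_nu_inv_sweedler cm_nu_inv_gen)
  also have "eqmod Vop \<dots> (cm_nu_inv_term (act 1 a) (1 * h) (act 1 b * c) a' h' b')"
    by (rule Aop.sweedler2_one) (intro Aop_intros)+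
  also have "\<dots> = cm_nu_inv_term a h b (c * act 1 a') (1 * h') (act 1 b')"
    by (simp add: act_one cm_nu_inv_term_def mult.assoc)
  also have "eqmod Vop \<dots> (sw (\<lambda>u v. sw (\<lambda>p q. cm_nu_inv_term a h b (c * act p a') (q * h') (act v b')) u) 1)"
    by (rule Aop.eqmod_sym_V, rule Aop.sweedler2_one) (intro Aop_intros)+
  also have "\<dots> = cm_nu_inv (tprod (gen (a, h, b)) (cm_mult \<Delta> act (cm_source c) (gen (a', h', b'))))"
    by (simp add: cm_source_def cm_mult_gen tprod_sweedler_right cm_nu_inv_sweedler cm_nu_inv_gen)
  finally show ?thesis .
qed

lemma cm_nu_inv_A_rel:
  assumes "r \<in> cm_tens_A_rel scA scH \<Delta> act"
  shows "cm_nu_inv r \<in> Vop"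
proof -
  from assms consider "r \<in> TT"
    | c k k' where "r = tprod (cm_mult \<Delta> act (cm_target c) k) k' - tprod k (cm_mult \<Delta> act (cm_source c) k')"
    unfolding cm_tens_A_rel_def by blast
  then show ?thesis
  proof cases
    case 2
    have "cm_nu_inv (tprod (cm_mult \<Delta> act (cm_target c) k) k')
          - cm_nu_inv (tprod k (cm_mult \<Delta> act (cm_source c) k')) \<in> Vop"
    proof (rule bilinear_mem[OF Aop.subspace, where B = "\<lambda>k k'. cm_nu_inv (tprod (cm_mult \<Delta> act (cm_target c) k) k')
                                   - cm_nu_inv (tprod k (cm_mult \<Delta> act (cm_source c) k'))"])
      fix x y
      show "cm_nu_inv (tprod (cm_mult \<Delta> act (cm_target c) (gen x)) (gen y))
            - cm_nu_inv (tprod (gen x) (cm_mult \<Delta> act (cm_source c) (gen y))) \<in> Vop"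
        using cm_nu_inv_A_balanced_gen unfolding eqmod_def by (cases x, cases y) simp
    qed (simp_all add: bilinear_simps algebra_simps)
    with 2 show ?thesis by (simp add: cm_nu_inv_diff)
  qed (rule Aop.cm_nu_inv_TT)
qed

lemma cm_nu_inv_eqmod: "eqmod VA x y \<Longrightarrow> eqmod Vop (cm_nu_inv x) (cm_nu_inv y)"
  using lext_fspan_mem[OF Aop.subspace cm_nu_inv_A_rel[unfolded cm_nu_inv_def]]
  unfolding eqmod_def cm_nu_inv_diff[symmetric] unfolding cm_nu_inv_def .

lemma Vop_move_target:
  "eqmod Vop (gen ((a, u, 1), (a', h', b' * X))) (sw (\<lambda>w z. gen ((a, w, act z X), (a', h', b'))) u)"
proof -
  have "gen ((a, u, 1), (a', h', b' * X)) = gen ((a, u, 1), (act 1 a', 1 * h', act 1 b' * X))"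
    by (simp add: act_one)
  also have "eqmod Vop \<dots> (sw (\<lambda>w z. sw (\<lambda>p q. gen ((a, u, 1), (act p a', q * h', act z b' * X))) w) 1)"
    by (rule Aop.eqmod_sym_V, rule Aop.sweedler2_one) (intro Aop_intros)+
  also have "\<dots> = tprod (gen (a, u, 1)) (cm_mult \<Delta> act (cm_target X) (gen (a', h', b')))"
    by (simp add: cm_target_def cm_mult_gen tprod_sweedler_right)
  also have "eqmod Vop \<dots> (tprod (cm_mult \<Delta> act (gen (a, u, 1)) (cm_target X)) (gen (a', h', b')))"
    by (rule Aop.eqmod_sym_V[OF Vop_balanced])
  also have "\<dots> = sw (\<lambda>w z. sw (\<lambda>p q. gen ((scA (\<epsilon> p) a, q, act z X), (a', h', b'))) w) u"
    by (simp add: cm_target_def cm_mult_gen tprod_sweedler_left act_unit_mult)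
  also have "eqmod Vop \<dots> (sw (\<lambda>w z. sw (\<lambda>p q. fsc (\<epsilon> p) (gen ((a, q, act z X), (a', h', b')))) w) u)"
    using Aop.lin_mod_slots(1)[OF sc_linear_id]
    by (intro Aop.sweedler_cong) (simp add: lin_mod_def eqmod_def)
  also have "eqmod Vop \<dots> (sw (\<lambda>w z. gen ((a, w, act z X), (a', h', b'))) u)"
    by (intro Aop.sweedler_cong Aop.sweedler_counit_left Aop_intros)
  finally show ?thesis .
qed

lemma Vop_normal_form:
  "eqmod Vop (sw (\<lambda>u v. gen ((a, u, 1), (a', h', b' * act (S v) b))) h) (gen ((a, h, b), (a', h', b')))"
proof -
  have "eqmod Vop (sw (\<lambda>u v. gen ((a, u, 1), (a', h', b' * act (S v) b))) h)
                  (sw (\<lambda>u v. sw (\<lambda>w z. gen ((a, w, act (z * S v) b), (a', h', b'))) u) h)"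
    unfolding act_mult by (intro Aop.sweedler_cong Vop_move_target)
  also have "eqmod Vop \<dots> (gen ((a, h, act 1 b), (a', h', b')))"
    by (rule Aop.sweedler_antipode_cancel_right[where \<Phi> = "\<lambda>w t. gen ((a, w, act t b), (a', h', b'))"])
       (intro Aop_intros)+
  finally show ?thesis by (simp add: act_one)
qed

lemma cm_nu_inv_cm_nu_normal:
  "eqmod Vop (cm_nu_inv (cm_nu \<Delta> act (gen ((a, h, 1), (a', h', b'))))) (gen ((a, h, 1), (a', h', b')))"
proof -
  let ?G = "\<lambda>k x y z. gen ((a, k, 1), (act z a', y * h', act x b'))"
  have "cm_nu_inv (cm_nu \<Delta> act (gen ((a, h, 1), (a', h', b'))))
      = sw (\<lambda>u k7. sw (\<lambda>y k6. sw (\<lambda>x k5. sw (\<lambda>u' k4. sw (\<lambda>y' k3. sw (\<lambda>k1 k2.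
          ?G k1 (S k2 * k7) (S k3 * k6) (S k4 * k5)) y') u') x) y) u) h"
    by (simp add: cm_nu_gen cm_nu_term_def cm_nu_inv_sweedler cm_nu_inv_gen cm_nu_inv_term_def
        act_mult mult.assoc)
  also have "eqmod Vop \<dots> (?G h 1 1 1)"
    by (rule Aop.sweedler_antipode_cancel3_left[where G = ?G]) (intro Aop_intros | assumption)+
  finally show ?thesis by (simp add: act_one)
qed

lemma cm_nu_inv_cm_nu: "eqmod Vop (cm_nu_inv (cm_nu \<Delta> act x)) x"
proof (induction x rule: fs_induct)
  case (gen g)
  obtain a h b a' h' b' where g: "g = ((a, h, b), (a', h', b'))"
    by (cases g) auto
  let ?n = "sw (\<lambda>u v. gen ((a, u, 1), (a', h', b' * act (S v) b))) h"
  have "eqmod Vop (cm_nu_inv (cm_nu \<Delta> act (gen g))) (cm_nu_inv (cm_nu \<Delta> act ?n))"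
    unfolding g
    by (rule cm_nu_inv_eqmod, rule cm_nu_eqmod, rule Aop.eqmod_sym_V, rule Vop_normal_form)
  also have "cm_nu_inv (cm_nu \<Delta> act ?n)
      = sw (\<lambda>u v. cm_nu_inv (cm_nu \<Delta> act (gen ((a, u, 1), (a', h', b' * act (S v) b))))) h"
    by (simp add: cm_nu_sweedler cm_nu_inv_sweedler)
  also have "eqmod Vop \<dots> ?n"
    by (intro Aop.sweedler_cong cm_nu_inv_cm_nu_normal)
  also have "eqmod Vop \<dots> (gen g)"
    unfolding g by (rule Vop_normal_form)
  finally show ?case .
qed (simp_all add: Aop.eqmod_refl_V cm_nu_zero cm_nu_inv_zero cm_nu_add cm_nu_inv_add cm_nu_fsc cm_nu_inv_fsc
                   eqmod_add[OF Aop.subspace] eqmod_fsc[OF Aop.subspace])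

lemma VA_move_source: "eqmod VA (gen ((a, h, 1), (b * a', h', b'))) (gen ((a, h, b), (a', h', b')))"
proof -
  have "gen ((a, h, 1), (b * a', h', b')) = gen ((a, h, 1), (b * act 1 a', 1 * h', act 1 b'))"
    by (simp add: act_one)
  also have "eqmod VA \<dots> (sw (\<lambda>u v. sw (\<lambda>p q. gen ((a, h, 1), (b * act p a', q * h', act v b'))) u) 1)"
    by (rule A.eqmod_sym_V, rule A.sweedler2_one) (intro A_intros)+
  also have "\<dots> = tprod (gen (a, h, 1)) (cm_mult \<Delta> act (cm_source b) (gen (a', h', b')))"
    by (simp add: cm_source_def cm_mult_gen tprod_sweedler_right)
  also have "eqmod VA \<dots> (tprod (cm_mult \<Delta> act (cm_target b) (gen (a, h, 1))) (gen (a', h', b')))"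
    by (rule A.eqmod_sym_V[OF VA_balanced])
  also have "\<dots> = sw (\<lambda>u v. sw (\<lambda>p q. gen ((act p a, q * h, act v 1 * b), (a', h', b'))) u) 1"
    by (simp add: cm_target_def cm_mult_gen tprod_sweedler_left)
  also have "eqmod VA \<dots> (gen ((act 1 a, 1 * h, act 1 1 * b), (a', h', b')))"
    by (rule A.sweedler2_one) (intro A_intros)+
  finally show ?thesis by (simp add: act_one)
qed

lemma cm_nu_cm_nu_inv_gen:
  "eqmod VA (cm_nu \<Delta> act (cm_nu_inv (gen ((a, h, b), (a', h', b'))))) (gen ((a, h, 1), (b * a', h', b')))"
proof -
  let ?G = "\<lambda>k x y z. gen ((a, k, 1), (act x (b * a'), y * h', act z b'))"
  have "cm_nu \<Delta> act (cm_nu_inv (gen ((a, h, b), (a', h', b'))))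
      = sw (\<lambda>u k7. sw (\<lambda>y k6. sw (\<lambda>x k5. sw (\<lambda>u' k4. sw (\<lambda>y' k3. sw (\<lambda>k1 k2.
          ?G k1 (k2 * S k7) (k3 * S k6) (k4 * S k5)) y') u') x) y) u) h"
    by (simp add: cm_nu_gen cm_nu_term_def cm_nu_sweedler cm_nu_inv_gen cm_nu_inv_term_def
        act_mult mult.assoc)
  also have "eqmod VA \<dots> (?G h 1 1 1)"
    by (rule A.sweedler_antipode_cancel3_right[where G = ?G]) (intro A_intros | assumption)+
  finally show ?thesis by (simp add: act_one)
qed

lemma cm_nu_cm_nu_inv: "eqmod VA (cm_nu \<Delta> act (cm_nu_inv x)) x"
proof (induction x rule: fs_induct)
  case (gen g)
  then show ?case
    using A.eqmod_trans_V[OF cm_nu_cm_nu_inv_gen VA_move_source] by (cases g) auto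
qed (simp_all add: A.eqmod_refl_V cm_nu_zero cm_nu_inv_zero cm_nu_add cm_nu_inv_add cm_nu_fsc cm_nu_inv_fsc
                   eqmod_add[OF A.subspace] eqmod_fsc[OF A.subspace])

end


theorem mainTheorem9:
  fixes scH :: "complex \<Rightarrow> 'h::ring_1 \<Rightarrow> 'h"
    and \<Delta> :: "'h \<Rightarrow> ('h \<times> 'h) fs"
    and \<epsilon> :: "'h \<Rightarrow> complex"
    and S :: "'h \<Rightarrow> 'h"
    and scA :: "complex \<Rightarrow> 'a::ring_1 \<Rightarrow> 'a"
    and act :: "'h \<Rightarrow> 'a \<Rightarrow> 'a"
  assumes "hopf_algebra scH \<Delta> \<epsilon> S"
    and "module_algebra scH \<Delta> \<epsilon> scA act"
  shows "(\<forall>x y. fequiv (cm_tens_Aop_rel scA scH \<Delta> act) x y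
               \<longrightarrow> fequiv (cm_tens_A_rel scA scH \<Delta> act) (cm_nu \<Delta> act x) (cm_nu \<Delta> act y))
       \<and> (\<forall>x y. fequiv (cm_tens_A_rel scA scH \<Delta> act) (cm_nu \<Delta> act x) (cm_nu \<Delta> act y)
               \<longrightarrow> fequiv (cm_tens_Aop_rel scA scH \<Delta> act) x y)
       \<and> (\<forall>z. \<exists>x. fequiv (cm_tens_A_rel scA scH \<Delta> act) (cm_nu \<Delta> act x) z)"
proof -
  interpret cm_setting scH \<Delta> \<epsilon> S scA act
    by unfold_locales (rule assms)+
  note eqmod_trans[OF fs_subspace_fspan, trans]
  have injective: "eqmod Vop x y" if "eqmod VA (cm_nu \<Delta> act x) (cm_nu \<Delta> act y)" for x y
  proof -
    have "eqmod Vop x (cm_nu_inv (cm_nu \<Delta> act x))"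
      by (rule eqmod_sym[OF fs_subspace_fspan cm_nu_inv_cm_nu])
    also have "eqmod Vop \<dots> (cm_nu_inv (cm_nu \<Delta> act y))"
      by (rule cm_nu_inv_eqmod[OF that])
    also have "eqmod Vop \<dots> y"
      by (rule cm_nu_inv_cm_nu)
    finally show ?thesis .
  qed
  show ?thesis
    unfolding fequiv_iff_eqmod using cm_nu_eqmod injective cm_nu_cm_nu_inv by blast
qed

end
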